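(* Let $\mathcal{H}_A,\mathcal{H}_B$ be complex Hilbert spaces of equal finite dimension $N$, let $\mathcal{H}_{AB}=\mathcal{H}_A\otimes\mathcal{H}_B$, let $0\le s\le\log N$, and let $\mathcal{E}=\mathcal{E}_A\otimes\mathcal{E}_B$ be a product of quantum channels (CPTP maps) $\mathcal{E}_A$ on $\mathcal{H}_A$ and $\mathcal{E}_B$ on $\mathcal{H}_B$. Then the optimal (smallest) privacy parameter $\varepsilon^*(s)$ for which $\mathcal{E}$ is ECLM-$\varepsilon$-QLDP on $\mathbb{H}_s$ is $$\varepsilon^*(s)=\log \max_{\ket{\phi_a}\in\mathcal{H}_A}\ \max_{\ket{\phi_b}\in\mathcal{H}_B}\ \frac{J_{\max}(\mathcal{K}_\phi,s)}{J_{\min}(\mathcal{K}_\phi,s)},$$ where the maxima range over unit vectors, $\mathcal{K}_\phi=\mathcal{E}_A^\dagger(\ket{\phi_a}\bra{\phi_a})\otimes\mathcal{E}_B^\dagger(\ket{\phi_b}\bra{\phi_b})$, and the ratio is interpreted as $+\infty$ (so $\varepsilon^*(s)=+\infty$, i.e. no finite $\varepsilon$ works) when the denominator vanishes and the numerator is positive.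
   Context: Entanglement entropy: for a unit vector $\ket{\psi}\in\mathcal{H}_{AB}$ with Schmidt decomposition $\ket{\psi}=\sum_j\sqrt{\lambda_j}\ket{j_A}\otimes\ket{j_B}$, $\mathbf{E}(\psi)=-\sum_j\lambda_j\log\lambda_j$ (the von Neumann entropy of the reduced state $\operatorname{Tr}_B\ket{\psi}\bra{\psi}$). The entanglement-constrained domain is $\mathbb{H}_s=\{\rho=\ket{\psi}\bra{\psi}:\ \ket{\psi}\in\mathcal{H}_{AB}\text{ unit},\ \mathbf{E}(\psi)\ge s\}$; pure states are identified with their rank-one density operators. $\mathcal{E}^\dagger$ denotes the Hilbert–Schmidt adjoint of a channel, so $\operatorname{Tr}(M\,\mathcal{E}(\rho))=\operatorname{Tr}(\mathcal{E}^\dagger(M)\rho)$. A local measurement (LM) adversary is a product POVM $\{\mathcal{M}_a\otimes\mathcal{M}_b\}_{(a,b)\in O_A\times O_B}$, where $\{\mathcal{M}_a\}_{a\in O_A}$ and $\{\mathcal{M}_b\}_{b\in O_B}$ are finite POVMs on $\mathcal{H}_A$ and $\mathcal{H}_B$; the outcome distribution on input $\rho$ is $\Pr[(a,b)]=\operatorname{Tr}((\mathcal{M}_a\otimes\mathcal{M}_b)\mathcal{E}(\rho))$. The mechanism $\mathcal{E}$ is ECLM-$\varepsilon$-QLDP on $\mathbb{H}_s$ if for every LM adversary $\mathcal{M}$, every $\rho,\rho'\in\mathbb{H}_s$ and every $T\subseteq O_A\times O_B$: $\Pr[\mathcal{M}(\mathcal{E}(\rho))\in T]\le e^{\varepsilon}\Pr[\mathcal{M}(\mathcal{E}(\rho'))\in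 T]$. For a positive semidefinite operator $\mathcal{K}$ on $\mathcal{H}_{AB}$: $J_{\max}(\mathcal{K},s)=\max_{\ket{\psi}\bra{\psi}\in\mathbb{H}_s}\bra{\psi}\mathcal{K}\ket{\psi}$ and $J_{\min}(\mathcal{K},s)=\min_{\ket{\psi}\bra{\psi}\in\mathbb{H}_s}\bra{\psi}\mathcal{K}\ket{\psi}$. *)

theory Defs
  imports "Jordan_Normal_Form.Jordan_Normal_Form" "HOL-Library.Extended_Real"
    "HOL-Computational_Algebra.Fundamental_Theorem_Algebra"
begin

text \<open>Finite-dimensional complex Hilbert spaces are modelled as coordinate spaces
  C^N (complex vec of dimension N); operators are complex N x N matrices.
  H_A = H_B = C^N, and H_AB = C^(N*N) with the basis ordering |a> (x) |b> = e_(a*N+b).\<close>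

definition mtrace :: "complex mat \<Rightarrow> complex" where
  "mtrace A = (\<Sum>i<dim_row A. A $$ (i, i))"

definition kron :: "complex mat \<Rightarrow> complex mat \<Rightarrow> complex mat" where
  "kron A B = mat (dim_row A * dim_row B) (dim_col A * dim_col B)
     (\<lambda>(i, j). A $$ (i div dim_row B, j div dim_col B) * B $$ (i mod dim_row B, j mod dim_col B))"

definition ketbra :: "complex vec \<Rightarrow> complex mat" where
  "ketbra v = mat (dim_vec v) (dim_vec v) (\<lambda>(i, j). v $ i * cnj (v $ j))"

definition is_unit_vector :: "nat \<Rightarrow> complex vec \<Rightarrow> bool" where
  "is_unit_vector n v \<longleftrightarrow> v \<in> carrier_vec n \<and> (\<Sum>i<n. (cmod (v $ i))\<^sup>2) = 1"

definition emat :: "nat \<Rightarrow> nat \<Rightarrow> nat \<Rightarrow> complex mat" where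
  "emat N i j = mat N N (\<lambda>(r, c). if r = i \<and> c = j then 1 else 0)"

definition psd :: "nat \<Rightarrow> complex mat \<Rightarrow> bool" where
  "psd n A \<longleftrightarrow> A \<in> carrier_mat n n \<and>
     (\<forall>v \<in> carrier_vec n. let q = (\<Sum>i<n. \<Sum>j<n. cnj (v $ i) * A $$ (i, j) * v $ j)
                              in Im q = 0 \<and> Re q \<ge> 0)"

text \<open>Ampliation E (x) id_k, acting on operators on C^N (x) C^k (index a*k+r).\<close>
definition ampliate :: "nat \<Rightarrow> (complex mat \<Rightarrow> complex mat) \<Rightarrow> nat \<Rightarrow> complex mat \<Rightarrow> complex mat" where
  "ampliate N E k X = mat (N * k) (N * k)
     (\<lambda>(r, c). E (mat N N (\<lambda>(a, b). X $$ (a * k + r mod k, b * k + c mod k))) $$ (r div k, c div k))"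

definition cptp :: "nat \<Rightarrow> (complex mat \<Rightarrow> complex mat) \<Rightarrow> bool" where
  "cptp N E \<longleftrightarrow>
     (\<forall>X \<in> carrier_mat N N. E X \<in> carrier_mat N N) \<and>
     (\<forall>X \<in> carrier_mat N N. \<forall>Y \<in> carrier_mat N N. E (X + Y) = E X + E Y) \<and>
     (\<forall>c. \<forall>X \<in> carrier_mat N N. E (c \<cdot>\<^sub>m X) = c \<cdot>\<^sub>m E X) \<and>
     (\<forall>X \<in> carrier_mat N N. mtrace (E X) = mtrace X) \<and>
     (\<forall>k. \<forall>X \<in> carrier_mat (N * k) (N * k). psd (N * k) X \<longrightarrow> psd (N * k) (ampliate N E k X))"

text \<open>Hilbert-Schmidt adjoint: the unique map with Tr(M E(rho)) = Tr(E^dagger(M) rho);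
  entrywise E^dagger(M)_(i,j) = Tr(M E(|j><i|)).\<close>
definition hs_adjoint :: "nat \<Rightarrow> (complex mat \<Rightarrow> complex mat) \<Rightarrow> complex mat \<Rightarrow> complex mat" where
  "hs_adjoint N E M = mat N N (\<lambda>(i, j). mtrace (M * E (emat N j i)))"

text \<open>Product channel E_A (x) E_B on operators of C^N (x) C^N, the linear extension of
  X (x) Y \<mapsto> E_A X (x) E_B Y.\<close>
definition prod_channel :: "nat \<Rightarrow> (complex mat \<Rightarrow> complex mat) \<Rightarrow> (complex mat \<Rightarrow> complex mat)
    \<Rightarrow> complex mat \<Rightarrow> complex mat" where
  "prod_channel N EA EB Z = mat (N * N) (N * N) (\<lambda>(r, c).
     \<Sum>i<N. \<Sum>j<N. \<Sum>k<N. \<Sum>l<N. Z $$ (i * N + k, j * N + l) *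
        EA (emat N i j) $$ (r div N, c div N) * EB (emat N k l) $$ (r mod N, c mod N))"

definition ptrace_B :: "nat \<Rightarrow> complex mat \<Rightarrow> complex mat" where
  "ptrace_B N R = mat N N (\<lambda>(a, a'). \<Sum>b<N. R $$ (a * N + b, a' * N + b))"

text \<open>von Neumann entropy (natural logarithm, 0 log 0 = 0), computed from the
  eigenvalues (with multiplicity) of the matrix.\<close>
definition vn_entropy :: "complex mat \<Rightarrow> real" where
  "vn_entropy R = - (\<Sum>x\<in>#proots (char_poly R). (if Re x \<le> 0 then 0 else Re x * ln (Re x)))"

definition ent_entropy :: "nat \<Rightarrow> complex vec \<Rightarrow> real" where
  "ent_entropy N \<psi> = vn_entropy (ptrace_B N (ketbra \<psi>))"

definition Hs :: "nat \<Rightarrow> real \<Rightarrow> complex mat set" where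
  "Hs N s = {ketbra \<psi> | \<psi>. is_unit_vector (N * N) \<psi> \<and> ent_entropy N \<psi> \<ge> s}"

definition Jmax :: "nat \<Rightarrow> complex mat \<Rightarrow> real \<Rightarrow> real" where
  "Jmax N K s = Sup ((\<lambda>\<rho>. Re (mtrace (K * \<rho>))) ` Hs N s)"

definition Jmin :: "nat \<Rightarrow> complex mat \<Rightarrow> real \<Rightarrow> real" where
  "Jmin N K s = Inf ((\<lambda>\<rho>. Re (mtrace (K * \<rho>))) ` Hs N s)"

definition povm :: "nat \<Rightarrow> nat \<Rightarrow> (nat \<Rightarrow> complex mat) \<Rightarrow> bool" where
  "povm N m M \<longleftrightarrow> (\<forall>i<m. psd N (M i)) \<and>
     (\<forall>r<N. \<forall>c<N. (\<Sum>i<m. M i $$ (r, c)) = (if r = c then 1 else 0))"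

definition lm_prob :: "nat \<Rightarrow> (complex mat \<Rightarrow> complex mat) \<Rightarrow> (complex mat \<Rightarrow> complex mat)
   \<Rightarrow> (nat \<Rightarrow> complex mat) \<Rightarrow> (nat \<Rightarrow> complex mat) \<Rightarrow> complex mat \<Rightarrow> (nat \<times> nat) set \<Rightarrow> real" where
  "lm_prob N EA EB MA MB \<rho> T =
     (\<Sum>(a, b)\<in>T. Re (mtrace (kron (MA a) (MB b) * prod_channel N EA EB \<rho>)))"

definition eclm_qldp :: "nat \<Rightarrow> (complex mat \<Rightarrow> complex mat) \<Rightarrow> (complex mat \<Rightarrow> complex mat)
   \<Rightarrow> real \<Rightarrow> real \<Rightarrow> bool" where
  "eclm_qldp N EA EB s \<epsilon> \<longleftrightarrow>
     (\<forall>ma mb MA MB. povm N ma MA \<longrightarrow> povm N mb MB \<longrightarrow>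
        (\<forall>\<rho> \<in> Hs N s. \<forall>\<rho>' \<in> Hs N s. \<forall>T. T \<subseteq> {..<ma} \<times> {..<mb} \<longrightarrow>
           lm_prob N EA EB MA MB \<rho> T \<le> exp \<epsilon> * lm_prob N EA EB MA MB \<rho>' T))"

text \<open>Optimal privacy parameter (infimum over admissible eps; +infinity if none).\<close>
definition eps_star :: "nat \<Rightarrow> (complex mat \<Rightarrow> complex mat) \<Rightarrow> (complex mat \<Rightarrow> complex mat)
   \<Rightarrow> real \<Rightarrow> ereal" where
  "eps_star N EA EB s = Inf {ereal \<epsilon> | \<epsilon>. eclm_qldp N EA EB s \<epsilon>}"

definition K_phi :: "nat \<Rightarrow> (complex mat \<Rightarrow> complex mat) \<Rightarrow> (complex mat \<Rightarrow> complex mat)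
   \<Rightarrow> complex vec \<Rightarrow> complex vec \<Rightarrow> complex mat" where
  "K_phi N EA EB \<phi>a \<phi>b = kron (hs_adjoint N EA (ketbra \<phi>a)) (hs_adjoint N EB (ketbra \<phi>b))"

text \<open>Ratio J_max/J_min with the convention x/0 = +infinity for x > 0;
  the degenerate case 0/0 (outcome of probability zero) is given value 1.\<close>
definition J_ratio :: "nat \<Rightarrow> complex mat \<Rightarrow> real \<Rightarrow> ereal" where
  "J_ratio N K s = (if Jmin N K s > 0 then ereal (Jmax N K s / Jmin N K s)
                    else if Jmax N K s > 0 then \<infinity> else 1)"

definition ereal_ln :: "ereal \<Rightarrow> ereal" where
  "ereal_ln x = (if x = \<infinity> then \<infinity> else if x \<le> 0 then -\<infinity> else ereal (ln (real_of_ereal x)))"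

end

theory Submission
  imports Defs
begin

(* By the duality Tr((M_A (x) M_B) (E_A (x) E_B)(rho)) = Tr((E_A^+ M_A (x) E_B^+ M_B) rho), the outcome (0,0)
   of the local POVMs {|phi_a><phi_a|, 1 - |phi_a><phi_a|} and {|phi_b><phi_b|, 1 - |phi_b><phi_b|} has
   probability Tr(K_phi rho); so every admissible eps satisfies e^eps >= J_max(K_phi,s) / J_min(K_phi,s).
   Conversely, every POVM element is a sum of rank-one operators |u><u| (Cholesky factorisation) and
   K_{u,v} is a nonnegative multiple of K_phi for normalised phi, so the probability of any outcome set of
   any local measurement is a nonnegative combination of values Tr(K_phi rho). With r the supremum of the
   ratios, Tr(K_phi rho) <= r Tr(K_phi rho') therefore transfers to all local measurements: ln r is
   admissible. *)

lemma index_pair_less: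
  fixes p q M N :: nat
  assumes "p < M" "q < N"
  shows "p * N + q < M * N"
proof -
  have "p * N + q < (p + 1) * N" using assms(2) by simp
  also have "\<dots> \<le> M * N" using assms(1) by (intro mult_le_mono1) simp
  finally show ?thesis .
qed

lemma div_mod_less_square:
  fixes r N :: nat
  assumes "r < N * N"
  shows "r div N < N" "r mod N < N"
proof -
  have "N > 0" using assms by (cases N) auto
  then show "r div N < N" "r mod N < N" using assms by (auto simp: less_mult_imp_div_less)
qed

lemma sum_index_pairs: "(\<Sum>r<M * (N::nat). g r) = (\<Sum>p<M. \<Sum>q<N. g (p * N + q))"
proof -
  have "(\<Sum>p<M. \<Sum>q<N. g (p * N + q)) = (\<Sum>(p, q)\<in>{..<M} \<times> {..<N}. g (p * N + q))"
    by (simp add: sum.cartesian_product)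
  also have "\<dots> = (\<Sum>r<M * N. g r)"
  proof (rule sum.reindex_bij_witness[where i = "\<lambda>r. (r div N, r mod N)" and j = "\<lambda>(p, q). p * N + q"])
    fix a assume a: "a \<in> {..<M} \<times> {..<N}"
    then show "(\<lambda>r. (r div N, r mod N)) ((\<lambda>(p, q). p * N + q) a) = a"
      by (auto split: prod.splits)
    from a show "(\<lambda>(p, q). p * N + q) a \<in> {..<M * N}"
      by (auto split: prod.splits intro: index_pair_less)
  next
    fix b assume b: "b \<in> {..<M * N}"
    then show "(\<lambda>(p, q). p * N + q) (b div N, b mod N) = b" by simp
    have "N > 0" using b by (cases N) auto
    then show "(b div N, b mod N) \<in> {..<M} \<times> {..<N}"
      using b by (auto simp: less_mult_imp_div_less)
  qed (auto split: prod.splits)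
  finally show ?thesis ..
qed

lemma sum_index_pairs2:
  "(\<Sum>r<N * N. \<Sum>c<N * N. F (r div N) (r mod N) (c div N) (c mod N)) =
   (\<Sum>x<N. \<Sum>x'<(N::nat). \<Sum>y<N. \<Sum>y'<N. F x x' y y')"
  by (simp only: sum_index_pairs) (auto intro!: sum.cong)

lemma sum_pull_innermost:
  "(\<Sum>r\<in>A. \<Sum>c\<in>B. \<Sum>i\<in>C. f r c i) = (\<Sum>i\<in>C. \<Sum>r\<in>A. \<Sum>c\<in>B. f r c i)"
proof -
  have "(\<Sum>r\<in>A. \<Sum>c\<in>B. \<Sum>i\<in>C. f r c i) = (\<Sum>r\<in>A. \<Sum>i\<in>C. \<Sum>c\<in>B. f r c i)"
    by (rule sum.cong[OF refl], rule sum.swap)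
  also have "\<dots> = (\<Sum>i\<in>C. \<Sum>r\<in>A. \<Sum>c\<in>B. f r c i)" by (rule sum.swap)
  finally show ?thesis .
qed

lemma sum_swap_pairs:
  "(\<Sum>a\<in>A. \<Sum>b\<in>B. \<Sum>c\<in>C. \<Sum>d\<in>D. f a b c d) = (\<Sum>c\<in>C. \<Sum>d\<in>D. \<Sum>a\<in>A. \<Sum>b\<in>B. f a b c d)"
  by (subst sum_pull_innermost) (rule sum.cong[OF refl], rule sum_pull_innermost)

lemma sum_indicator_mult_right:
  assumes "k < (n::nat)"
  shows "(\<Sum>j<n. c j * (if j = k then t else 0)) = c k * (t::complex)"
proof -
  have eq: "(\<lambda>j. c j * (if j = k then t else 0)) = (\<lambda>j. if j = k then c j * t else 0)" by auto
  show ?thesis unfolding eq using assms by (simp add: sum.delta)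
qed

lemma sum_indicator_mult_left:
  assumes "k < (n::nat)"
  shows "(\<Sum>j<n. (if j = k then t else 0) * c j) = (t::complex) * c k"
proof -
  have eq: "(\<lambda>j. (if j = k then t else 0) * c j) = (\<lambda>j. if j = k then t * c j else 0)" by auto
  show ?thesis unfolding eq using assms by (simp add: sum.delta)
qed

lemma cnj_mult_self_real: "cnj z * z = complex_of_real ((cmod z)\<^sup>2)"
  by (subst complex_norm_square) (rule mult.commute)

section \<open>Positive semidefinite matrices\<close>

definition qform :: "nat \<Rightarrow> complex mat \<Rightarrow> complex vec \<Rightarrow> complex" where
  "qform n A v = (\<Sum>i<n. \<Sum>j<n. cnj (v $ i) * A $$ (i, j) * v $ j)"

definition sform :: "nat \<Rightarrow> complex mat \<Rightarrow> (nat \<Rightarrow> complex) \<Rightarrow> (nat \<Rightarrow> complex) \<Rightarrow> complex" where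
  "sform n A a b = (\<Sum>i<n. \<Sum>j<n. cnj (a i) * A $$ (i, j) * b j)"

lemma psd_iff_qform: "psd n A \<longleftrightarrow> A \<in> carrier_mat n n \<and>
   (\<forall>v\<in>carrier_vec n. Im (qform n A v) = 0 \<and> Re (qform n A v) \<ge> 0)"
  unfolding psd_def qform_def Let_def by simp

lemma psd_carrier: "psd n A \<Longrightarrow> A \<in> carrier_mat n n"
  unfolding psd_def by blast

lemma psd_qform: "psd n A \<Longrightarrow> v \<in> carrier_vec n \<Longrightarrow> Im (qform n A v) = 0 \<and> Re (qform n A v) \<ge> 0"
  unfolding psd_iff_qform by blast

lemma qform_eq_sform: "qform n A v = sform n A (\<lambda>i. v $ i) (\<lambda>i. v $ i)"
  unfolding qform_def sform_def by simp

lemma psd_sform: "psd n A \<Longrightarrow> Im (sform n A a a) = 0 \<and> Re (sform n A a a) \<ge> 0"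
proof -
  assume "psd n A"
  moreover have "qform n A (vec n a) = sform n A a a"
    unfolding qform_def sform_def by (intro sum.cong refl) simp
  ultimately show ?thesis using psd_qform[of n A "vec n a"] by simp
qed

lemma sform_add:
  "sform n A (\<lambda>i. a i + b i) (\<lambda>i. a i + b i) = sform n A a a + sform n A b b + sform n A a b + sform n A b a"
  unfolding sform_def by (simp add: ring_distribs sum.distrib)

lemma sform_indicator_right:
  "k < n \<Longrightarrow> sform n A a (\<lambda>j. if j = k then t else 0) = t * (\<Sum>i<n. cnj (a i) * A $$ (i, k))"
  unfolding sform_def by (simp only: sum_indicator_mult_right) (simp add: sum_distrib_left mult_ac)

lemma sform_indicator_left:
  assumes "k < n"
  shows "sform n A (\<lambda>j. if j = k then t else 0) a = cnj t * (\<Sum>j<n. A $$ (k, j) * a j)"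
proof -
  have "sform n A (\<lambda>j. if j = k then t else 0) a =
      (\<Sum>j<n. \<Sum>i<n. (if i = k then cnj t else 0) * (A $$ (i, j) * a j))"
    unfolding sform_def by (subst sum.swap) (auto intro!: sum.cong simp: mult_ac)
  also have "\<dots> = cnj t * (\<Sum>j<n. A $$ (k, j) * a j)"
    using assms by (simp add: sum_indicator_mult_left sum_distrib_left)
  finally show ?thesis .
qed

lemma sform_indicator_both:
  "k < n \<Longrightarrow> l < n \<Longrightarrow>
   sform n A (\<lambda>j. if j = k then t else 0) (\<lambda>j. if j = l then u else 0) = cnj t * A $$ (k, l) * u"
  by (simp add: sform_indicator_left sum_indicator_mult_right)

lemma psd_diag_nonneg: "psd n A \<Longrightarrow> k < n \<Longrightarrow> Im (A $$ (k, k)) = 0 \<and> Re (A $$ (k, k)) \<ge> 0"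
  using psd_sform[of n A "\<lambda>j. if j = k then 1 else 0"] by (simp add: sform_indicator_both)

text \<open>Polarisation: test the form on \<open>e\<^sub>i + e\<^sub>j\<close> and \<open>e\<^sub>i + \<i> e\<^sub>j\<close>.\<close>
lemma psd_hermitian:
  assumes A: "psd n A" and i: "i < n" and j: "j < n"
  shows "A $$ (j, i) = cnj (A $$ (i, j))"
proof -
  let ?e = "\<lambda>t x. if x = j then (t::complex) else 0"
  have e: "sform n A (\<lambda>x. (if x = i then 1 else 0) + ?e t x) (\<lambda>x. (if x = i then 1 else 0) + ?e t x) =
     A $$ (i, i) + cnj t * A $$ (j, j) * t + t * A $$ (i, j) + cnj t * A $$ (j, i)" for t
    unfolding sform_add using i j by (simp add: sform_indicator_both)
  have "Im (sform n A (\<lambda>x. (if x = i then 1 else 0) + ?e t x) (\<lambda>x. (if x = i then 1 else 0) + ?e t x)) = 0" for t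
    using psd_sform[OF A] by blast
  from this[of 1] this[of \<i>]
  have 1: "Im (A $$ (i, i) + A $$ (j, j) + A $$ (i, j) + A $$ (j, i)) = 0"
    and 2: "Im (A $$ (i, i) + A $$ (j, j) + \<i> * A $$ (i, j) - \<i> * A $$ (j, i)) = 0"
    unfolding e by (simp_all add: algebra_simps)
  have "Im (A $$ (i, i)) = 0" "Im (A $$ (j, j)) = 0" using psd_diag_nonneg[OF A] i j by auto
  then show ?thesis using 1 2 by (intro complex_eqI) auto
qed

lemma nonneg_quadratic_imp_le:
  fixes q m \<alpha> :: real
  assumes nonneg: "\<And>s. 0 \<le> q + s\<^sup>2 * m * \<alpha> - 2 * s * m" and "\<alpha> \<ge> 0"
  shows "m \<le> \<alpha> * q"
proof (cases "\<alpha> > 0")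
  case True
  have "0 \<le> q + (1 / \<alpha>)\<^sup>2 * m * \<alpha> - 2 * (1 / \<alpha>) * m" by (rule nonneg)
  then show ?thesis using True by (simp add: power2_eq_square field_simps)
next
  case False
  with \<open>\<alpha> \<ge> 0\<close> have "\<alpha> = 0" by simp
  show ?thesis
  proof (rule ccontr)
    assume "\<not> m \<le> \<alpha> * q"
    then have "m > 0" using \<open>\<alpha> = 0\<close> by simp
    have "0 \<le> q + ((q + 1) / (2 * m))\<^sup>2 * m * \<alpha> - 2 * ((q + 1) / (2 * m)) * m" by (rule nonneg)
    then show False using \<open>\<alpha> = 0\<close> \<open>m > 0\<close> by (simp add: field_simps)
  qed
qed

lemma psd_cauchy_schwarz:
  assumes A: "psd n A" and k: "k < n"
  shows "(cmod (\<Sum>j<n. A $$ (k, j) * a j))\<^sup>2 \<le> Re (A $$ (k, k)) * Re (sform n A a a)"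
proof -
  define c where "c = (\<Sum>j<n. A $$ (k, j) * a j)"
  define m where "m = (cmod c)\<^sup>2"
  have cc: "c * cnj c = complex_of_real m" unfolding m_def by (rule complex_norm_square[symmetric])
  have col: "(\<Sum>i<n. cnj (a i) * A $$ (i, k)) = cnj c"
    unfolding c_def by (simp add: psd_hermitian[OF A k] mult.commute)
  have Akk: "A $$ (k, k) = complex_of_real (Re (A $$ (k, k)))"
    using psd_diag_nonneg[OF A k] by (simp add: complex_eq_iff)
  have "0 \<le> Re (sform n A a a) + s\<^sup>2 * m * Re (A $$ (k, k)) - 2 * s * m" for s :: real
  proof -
    let ?t = "- (complex_of_real s * c)"
    have expand: "sform n A (\<lambda>x. a x + (if x = k then ?t else 0)) (\<lambda>x. a x + (if x = k then ?t else 0)) =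
        sform n A a a + cnj ?t * A $$ (k, k) * ?t + ?t * cnj c + cnj ?t * c"
      unfolding sform_add using k
      by (simp add: sform_indicator_both sform_indicator_right sform_indicator_left col c_def[symmetric])
    have "cnj ?t * A $$ (k, k) * ?t = complex_of_real (s\<^sup>2) * (c * cnj c) * A $$ (k, k)"
      by (simp add: power2_eq_square mult_ac)
    then have 1: "Re (cnj ?t * A $$ (k, k) * ?t) = s\<^sup>2 * m * Re (A $$ (k, k))"
      by (subst (asm) Akk) (simp add: cc)
    have 2: "?t * cnj c = - complex_of_real (s * m)" and 3: "cnj ?t * c = - complex_of_real (s * m)"
      by (simp_all add: cc[symmetric] mult_ac)
    have "0 \<le> Re (sform n A (\<lambda>x. a x + (if x = k then ?t else 0)) (\<lambda>x. a x + (if x = k then ?t else 0)))"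
      using psd_sform[OF A] by blast
    then show ?thesis unfolding expand plus_complex.sel 1 2 3 by (simp add: mult_ac)
  qed
  then have "m \<le> Re (A $$ (k, k)) * Re (sform n A a a)"
    by (rule nonneg_quadratic_imp_le) (use psd_diag_nonneg[OF A k] in blast)
  then show ?thesis unfolding m_def c_def .
qed

lemma ketbra_carrier [simp]: "v \<in> carrier_vec n \<Longrightarrow> ketbra v \<in> carrier_mat n n"
  unfolding ketbra_def by simp

lemma ketbra_dims [simp]: "dim_row (ketbra v) = dim_vec v" "dim_col (ketbra v) = dim_vec v"
  unfolding ketbra_def by simp_all

lemma ketbra_entry: "v \<in> carrier_vec n \<Longrightarrow> i < n \<Longrightarrow> j < n \<Longrightarrow> ketbra v $$ (i, j) = v $ i * cnj (v $ j)"
  unfolding ketbra_def by simp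

lemma qform_ketbra:
  assumes "v \<in> carrier_vec n"
  shows "qform n (ketbra v) w = complex_of_real ((cmod (\<Sum>i<n. cnj (w $ i) * v $ i))\<^sup>2)"
proof -
  define z where "z = (\<Sum>i<n. cnj (w $ i) * v $ i)"
  have "qform n (ketbra v) w = (\<Sum>i<n. \<Sum>j<n. (cnj (w $ i) * v $ i) * (cnj (v $ j) * w $ j))"
    unfolding qform_def using assms by (intro sum.cong refl) (simp add: ketbra_entry mult_ac)
  also have "\<dots> = z * (\<Sum>j<n. cnj (v $ j) * w $ j)"
    unfolding z_def by (simp add: sum_product)
  also have "(\<Sum>j<n. cnj (v $ j) * w $ j) = cnj z"
    unfolding z_def by (simp add: mult.commute)
  finally show ?thesis unfolding z_def[symmetric] complex_norm_square .
qed

lemma psd_ketbra: "v \<in> carrier_vec n \<Longrightarrow> psd n (ketbra v)"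
  unfolding psd_iff_qform by (simp add: qform_ketbra)

lemma qform_minus:
  assumes "A \<in> carrier_mat n n" "B \<in> carrier_mat n n"
  shows "qform n (A - B) v = qform n A v - qform n B v"
  unfolding qform_def using assms by (simp add: algebra_simps sum_subtractf)

lemma qform_one: "qform n (1\<^sub>m n) v = (\<Sum>i<n. complex_of_real ((cmod (v $ i))\<^sup>2))"
proof -
  have "qform n (1\<^sub>m n) v = (\<Sum>i<n. \<Sum>j<n. if j = i then cnj (v $ i) * v $ j else 0)"
    unfolding qform_def by (intro sum.cong refl) auto
  then show ?thesis by (simp add: cnj_mult_self_real)
qed

lemma psd_one: "psd n (1\<^sub>m n)"
  unfolding psd_iff_qform qform_one by (simp add: sum_nonneg)

lemma is_unit_vector_carrier: "is_unit_vector n v \<Longrightarrow> v \<in> carrier_vec n"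
  unfolding is_unit_vector_def by blast

lemma qform_one_unit: "is_unit_vector n v \<Longrightarrow> qform n (1\<^sub>m n) v = 1"
  unfolding qform_one of_real_sum[symmetric] is_unit_vector_def by simp

lemma is_unit_vector_unit_vec:
  assumes "N \<ge> 1"
  shows "is_unit_vector N (unit_vec N 0)"
proof -
  have "(\<Sum>i<N. (cmod (unit_vec N 0 $ i))\<^sup>2) = (\<Sum>i<N. if i = 0 then 1 else 0)"
    by (intro sum.cong refl) (simp add: unit_vec_def)
  also have "\<dots> = 1" using assms by (simp add: sum.delta)
  finally show ?thesis unfolding is_unit_vector_def by simp
qed

text \<open>\<open>1 - |\<phi>\<rangle>\<langle>\<phi>|\<close> evaluated at \<open>v\<close> is the squared norm of \<open>v - \<langle>\<phi>, v\<rangle> \<phi>\<close>.\<close>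
lemma psd_one_minus_ketbra:
  assumes u: "is_unit_vector n \<phi>"
  shows "psd n (1\<^sub>m n - ketbra \<phi>)"
  unfolding psd_iff_qform
proof (intro conjI ballI)
  have \<phi>: "\<phi> \<in> carrier_vec n" using is_unit_vector_carrier[OF u] .
  show "1\<^sub>m n - ketbra \<phi> \<in> carrier_mat n n" using \<phi> by (intro minus_carrier_mat) simp
  fix v :: "complex vec" assume v: "v \<in> carrier_vec n"
  define z where "z = (\<Sum>i<n. cnj (\<phi> $ i) * v $ i)"
  define w where "w i = v $ i - z * \<phi> $ i" for i
  have conj_z: "(\<Sum>i<n. cnj (v $ i) * \<phi> $ i) = cnj z" unfolding z_def by (simp add: mult.commute)
  have norm_\<phi>: "(\<Sum>i<n. cnj (\<phi> $ i) * \<phi> $ i) = 1"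
    using qform_one_unit[OF u] unfolding qform_one by (simp add: cnj_mult_self_real)
  have one: "qform n (1\<^sub>m n) v = (\<Sum>i<n. cnj (v $ i) * v $ i)"
    by (simp only: qform_one cnj_mult_self_real)
  have proj: "qform n (ketbra \<phi>) v = cnj z * z"
    by (simp only: qform_ketbra[OF \<phi>] conj_z complex_mod_cnj cnj_mult_self_real)
  have "qform n (1\<^sub>m n - ketbra \<phi>) v = (\<Sum>i<n. cnj (v $ i) * v $ i) - cnj z * z"
    unfolding qform_minus[OF one_carrier_mat ketbra_carrier[OF \<phi>]] one proj ..
  also have "\<dots> = (\<Sum>i<n. cnj (w i) * w i)"
  proof -
    have "(\<Sum>i<n. cnj (w i) * w i) = (\<Sum>i<n. cnj (v $ i) * v $ i - z * (cnj (v $ i) * \<phi> $ i)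
        - cnj z * (cnj (\<phi> $ i) * v $ i) + cnj z * z * (cnj (\<phi> $ i) * \<phi> $ i))"
      unfolding w_def by (intro sum.cong refl) (simp add: algebra_simps)
    also have "\<dots> = (\<Sum>i<n. cnj (v $ i) * v $ i) - cnj z * z"
      by (simp add: sum.distrib sum_subtractf sum_distrib_left[symmetric] conj_z norm_\<phi> z_def[symmetric])
    finally show ?thesis by simp
  qed
  finally have q: "qform n (1\<^sub>m n - ketbra \<phi>) v = (\<Sum>i<n. complex_of_real ((cmod (w i))\<^sup>2))"
    by (simp add: cnj_mult_self_real)
  show "Im (qform n (1\<^sub>m n - ketbra \<phi>) v) = 0" "Re (qform n (1\<^sub>m n - ketbra \<phi>) v) \<ge> 0"
    unfolding q by (simp_all add: sum_nonneg)
qed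

lemma mtrace_mult:
  assumes "A \<in> carrier_mat n n" "B \<in> carrier_mat n n"
  shows "mtrace (A * B) = (\<Sum>i<n. \<Sum>j<n. A $$ (i, j) * B $$ (j, i))"
  using assms unfolding mtrace_def
  by (auto simp: scalar_prod_def atLeast0LessThan intro!: sum.cong)

lemma mtrace_ketbra:
  assumes "K \<in> carrier_mat n n" "\<psi> \<in> carrier_vec n"
  shows "mtrace (K * ketbra \<psi>) = qform n K \<psi>"
  unfolding mtrace_mult[OF assms(1) ketbra_carrier[OF assms(2)]] qform_def
  using assms(2) by (auto simp: ketbra_entry mult_ac intro!: sum.cong)

lemma ketbra_eq_smult_unit:
  assumes N: "N \<ge> 1" and u: "u \<in> carrier_vec N"
  obtains \<phi> c where "is_unit_vector N \<phi>" "c \<ge> 0" "ketbra u = complex_of_real c \<cdot>\<^sub>m ketbra \<phi>"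
proof (cases "u = 0\<^sub>v N")
  case True
  then have "ketbra u = complex_of_real 0 \<cdot>\<^sub>m ketbra (unit_vec N 0)"
    by (intro eq_matI) (auto simp: ketbra_def)
  with is_unit_vector_unit_vec[OF N] show ?thesis using that by blast
next
  case False
  define \<sigma> where "\<sigma> = sqrt (\<Sum>i<N. (cmod (u $ i))\<^sup>2)"
  have nz: "(\<Sum>i<N. (cmod (u $ i))\<^sup>2) \<noteq> 0"
  proof
    assume "(\<Sum>i<N. (cmod (u $ i))\<^sup>2) = 0"
    then have "u $ i = 0" if "i < N" for i using that by (simp add: sum_nonneg_eq_0_iff)
    with u False show False by (auto intro: eq_vecI)
  qed
  then have \<sigma>: "\<sigma> > 0" "\<sigma>\<^sup>2 = (\<Sum>i<N. (cmod (u $ i))\<^sup>2)"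
    unfolding \<sigma>_def by (simp_all add: sum_nonneg order_le_neq_trans)
  define \<phi> where "\<phi> = vec N (\<lambda>i. u $ i / complex_of_real \<sigma>)"
  have norm_\<phi>: "(\<Sum>i<N. (cmod (\<phi> $ i))\<^sup>2) = (\<Sum>i<N. (cmod (u $ i))\<^sup>2) / \<sigma>\<^sup>2"
    unfolding \<phi>_def sum_divide_distrib by (intro sum.cong refl) (simp add: norm_divide power_divide)
  show ?thesis
  proof (rule that)
    show "is_unit_vector N \<phi>" using norm_\<phi> \<sigma> nz unfolding is_unit_vector_def \<phi>_def by simp
    show "ketbra u = complex_of_real (\<sigma>\<^sup>2) \<cdot>\<^sub>m ketbra \<phi>"
      using u \<sigma>(1) by (intro eq_matI) (auto simp: ketbra_def \<phi>_def power2_eq_square)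
  qed simp
qed

definition rank_one_decomp :: "nat \<Rightarrow> complex mat \<Rightarrow> nat \<Rightarrow> (nat \<Rightarrow> complex vec) \<Rightarrow> bool" where
  "rank_one_decomp n A m us \<longleftrightarrow> (\<forall>l<m. us l \<in> carrier_vec n) \<and>
     (\<forall>i<n. \<forall>j<n. A $$ (i, j) = (\<Sum>l<m. us l $ i * cnj (us l $ j)))"

lemma rank_one_decomp_carrier: "rank_one_decomp n A m us \<Longrightarrow> l < m \<Longrightarrow> us l \<in> carrier_vec n"
  unfolding rank_one_decomp_def by blast

lemma rank_one_decomp_entry:
  assumes "rank_one_decomp n A m us" "i < n" "j < n"
  shows "A $$ (i, j) = (\<Sum>l<m. ketbra (us l) $$ (i, j))"
proof -
  have "ketbra (us l) $$ (i, j) = us l $ i * cnj (us l $ j)" if "l < m" for l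
    using ketbra_entry[OF rank_one_decomp_carrier[OF assms(1) that] assms(2,3)] .
  then show ?thesis using assms unfolding rank_one_decomp_def by simp
qed

lemma rank_one_decomp_ketbraI:
  assumes dec: "rank_one_decomp n (A - ketbra u) m us" and A: "A \<in> carrier_mat n n"
    and u: "u \<in> carrier_vec n"
  shows "rank_one_decomp n A (Suc m) (us(m := u))"
  unfolding rank_one_decomp_def
proof (intro conjI allI impI)
  fix l assume "l < Suc m"
  then show "(us(m := u)) l \<in> carrier_vec n" using dec u unfolding rank_one_decomp_def by auto
next
  fix i j assume i: "i < n" and j: "j < n"
  have "A $$ (i, j) = (A - ketbra u) $$ (i, j) + u $ i * cnj (u $ j)"
    using i j A u by (simp add: ketbra_entry)
  also have "\<dots> = (\<Sum>l<m. (us(m := u)) l $ i * cnj ((us(m := u)) l $ j)) + u $ i * cnj (u $ j)"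
    using dec i j unfolding rank_one_decomp_def by simp
  also have "\<dots> = (\<Sum>l<Suc m. (us(m := u)) l $ i * cnj ((us(m := u)) l $ j))" by simp
  finally show "A $$ (i, j) = (\<Sum>l<Suc m. (us(m := u)) l $ i * cnj ((us(m := u)) l $ j))" .
qed

lemma psd_zero_diag_row:
  assumes A: "psd n A" and k: "k < n" and j: "j < n" and Akk: "Re (A $$ (k, k)) = 0"
  shows "A $$ (k, j) = 0" "A $$ (j, k) = 0"
proof -
  have "(cmod (\<Sum>l<n. A $$ (k, l) * (if l = j then 1 else 0)))\<^sup>2 \<le>
      Re (A $$ (k, k)) * Re (sform n A (\<lambda>l. if l = j then 1 else 0) (\<lambda>l. if l = j then 1 else 0))"
    by (rule psd_cauchy_schwarz[OF A k])
  then show "A $$ (k, j) = 0" using Akk j by (simp add: sum_indicator_mult_right)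
  then show "A $$ (j, k) = 0" using psd_hermitian[OF A k j] by simp
qed

context
  fixes n k :: nat and A :: "complex mat" and u :: "complex vec"
  assumes A: "psd n A" and k: "k < n" and pos: "Re (A $$ (k, k)) > 0"
  defines "u \<equiv> vec n (\<lambda>i. A $$ (i, k) / complex_of_real (sqrt (Re (A $$ (k, k)))))"
begin

lemma column_ketbra_entry:
  assumes i: "i < n" and j: "j < n"
  shows "ketbra u $$ (i, j) = A $$ (i, k) * A $$ (k, j) / A $$ (k, k)"
proof -
  define \<sigma> where "\<sigma> = sqrt (Re (A $$ (k, k)))"
  have "complex_of_real \<sigma> * complex_of_real \<sigma> = complex_of_real (Re (A $$ (k, k)))"
    using pos unfolding \<sigma>_def of_real_mult[symmetric] by simp
  also have "\<dots> = A $$ (k, k)"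
    using psd_diag_nonneg[OF A k] by (simp add: complex_eq_iff)
  finally have \<sigma>\<sigma>: "complex_of_real \<sigma> * complex_of_real \<sigma> = A $$ (k, k)" .
  have herm: "cnj (A $$ (j, k)) = A $$ (k, j)" using psd_hermitian[OF A j k] by simp
  have "ketbra u $$ (i, j) = A $$ (i, k) * cnj (A $$ (j, k)) / (complex_of_real \<sigma> * complex_of_real \<sigma>)"
    using i j unfolding u_def \<sigma>_def by (simp add: ketbra_def)
  then show ?thesis unfolding \<sigma>\<sigma> herm .
qed

text \<open>One step of a Cholesky factorisation: removing \<open>|u\<rangle>\<langle>u|\<close> keeps \<open>A\<close> positive,
  by the Cauchy--Schwarz inequality for \<open>A\<close>.\<close>
lemma psd_minus_column_ketbra: "psd n (A - ketbra u)"
  unfolding psd_iff_qform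
proof (intro conjI ballI)
  have Ac: "A \<in> carrier_mat n n" using psd_carrier[OF A] .
  have u: "u \<in> carrier_vec n" unfolding u_def by simp
  show "A - ketbra u \<in> carrier_mat n n" using Ac u by (intro minus_carrier_mat) simp_all
  fix v :: "complex vec" assume v: "v \<in> carrier_vec n"
  define c where "c = (\<Sum>j<n. A $$ (k, j) * v $ j)"
  have "(\<Sum>i<n. cnj (v $ i) * u $ i) = cnj c / complex_of_real (sqrt (Re (A $$ (k, k))))"
    unfolding c_def u_def by (simp add: psd_hermitian[OF A k] sum_divide_distrib mult.commute)
  then have "qform n (ketbra u) v = complex_of_real ((cmod c)\<^sup>2 / Re (A $$ (k, k)))"
    using pos by (simp add: qform_ketbra[OF u] norm_divide power_divide)
  then have eq: "qform n (A - ketbra u) v = qform n A v - complex_of_real ((cmod c)\<^sup>2 / Re (A $$ (k, k)))"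
    by (simp add: qform_minus[OF Ac ketbra_carrier[OF u]])
  have cs: "(cmod c)\<^sup>2 \<le> Re (A $$ (k, k)) * Re (qform n A v)"
    unfolding c_def qform_eq_sform by (rule psd_cauchy_schwarz[OF A k])
  show "Im (qform n (A - ketbra u) v) = 0" unfolding eq using psd_qform[OF A v] by simp
  show "Re (qform n (A - ketbra u) v) \<ge> 0" unfolding eq using cs pos by (simp add: field_simps)
qed

end

lemma psd_rank_one_decomp_aux:
  assumes "psd n A" "k \<le> n" "\<forall>i<n. \<forall>j<n. (i < k \<or> j < k) \<longrightarrow> A $$ (i, j) = 0"
  shows "\<exists>m us. rank_one_decomp n A m us"
  using assms
proof (induction "n - k" arbitrary: k A)
  case 0
  then have "rank_one_decomp n A 0 (\<lambda>_. 0\<^sub>v n)" by (auto simp: rank_one_decomp_def)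
  then show ?case by blast
next
  case (Suc d)
  then have A: "psd n A" and k: "k < n" and d: "d = n - Suc k" by auto
  have zero: "A $$ (i, j) = 0" if "i < n" "j < n" "i < k \<or> j < k" for i j
    using Suc.prems(3) that by blast
  show ?case
  proof (cases "Re (A $$ (k, k)) = 0")
    case True
    have "A $$ (i, j) = 0" if ij: "i < n" "j < n" "i < Suc k \<or> j < Suc k" for i j
    proof -
      consider "i < k \<or> j < k" | "i = k" | "j = k" using ij(3) by linarith
      then show ?thesis
        by cases (simp_all add: zero ij psd_zero_diag_row[OF A k _ True])
    qed
    then show ?thesis using Suc.hyps(1)[OF d A] k by simp
  next
    case False
    then have pos: "Re (A $$ (k, k)) > 0" using psd_diag_nonneg[OF A k] by simp
    then have Akk: "A $$ (k, k) \<noteq> 0" by auto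
    define u where "u = vec n (\<lambda>i. A $$ (i, k) / complex_of_real (sqrt (Re (A $$ (k, k)))))"
    have Ac: "A \<in> carrier_mat n n" and u: "u \<in> carrier_vec n"
      using psd_carrier[OF A] unfolding u_def by simp_all
    have "(A - ketbra u) $$ (i, j) = 0" if ij: "i < n" "j < n" "i < Suc k \<or> j < Suc k" for i j
    proof -
      have eq: "(A - ketbra u) $$ (i, j) = A $$ (i, j) - A $$ (i, k) * A $$ (k, j) / A $$ (k, k)"
        using ij(1,2) Ac u column_ketbra_entry[OF A k pos, folded u_def] by simp
      consider "i < k" | "j < k" | "i = k" | "j = k" using ij(3) by linarith
      then show ?thesis unfolding eq by cases (simp_all add: zero ij k Akk)
    qed
    then have "\<exists>m us. rank_one_decomp n (A - ketbra u) m us"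
      using Suc.hyps(1)[OF d psd_minus_column_ketbra[OF A k pos, folded u_def]] k by simp
    then show ?thesis using rank_one_decomp_ketbraI[OF _ Ac u] by blast
  qed
qed

lemma psd_rank_one_decomp: "psd n A \<Longrightarrow> \<exists>m us. rank_one_decomp n A m us"
  by (rule psd_rank_one_decomp_aux[of n A 0]) auto

section \<open>Quantum channels and their adjoints\<close>

lemma emat_carrier [simp]: "emat N i j \<in> carrier_mat N N"
  unfolding emat_def by simp

lemma cptp_carrier: "cptp N E \<Longrightarrow> X \<in> carrier_mat N N \<Longrightarrow> E X \<in> carrier_mat N N"
  unfolding cptp_def by blast

lemma cptp_add:
  "cptp N E \<Longrightarrow> X \<in> carrier_mat N N \<Longrightarrow> Y \<in> carrier_mat N N \<Longrightarrow> E (X + Y) = E X + E Y"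
  unfolding cptp_def by blast

lemma cptp_smult: "cptp N E \<Longrightarrow> X \<in> carrier_mat N N \<Longrightarrow> E (c \<cdot>\<^sub>m X) = c \<cdot>\<^sub>m E X"
  unfolding cptp_def by blast

lemma cptp_mtrace: "cptp N E \<Longrightarrow> X \<in> carrier_mat N N \<Longrightarrow> mtrace (E X) = mtrace X"
  unfolding cptp_def by blast

lemma cptp_psd:
  assumes E: "cptp N E" and X: "psd N X"
  shows "psd N (E X)"
proof -
  have Xc: "X \<in> carrier_mat N N" using psd_carrier[OF X] .
  have "\<forall>k. \<forall>X\<in>carrier_mat (N * k) (N * k). psd (N * k) X \<longrightarrow> psd (N * k) (ampliate N E k X)"
    using E unfolding cptp_def by blast
  then have "psd (N * 1) (ampliate N E 1 X)" using X Xc by (metis mult_1_right)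
  moreover have "mat N N (\<lambda>(a, b). X $$ (a * 1 + r mod 1, b * 1 + c mod 1)) = X" for r c
    using Xc by (intro eq_matI) auto
  then have "ampliate N E 1 X = E X"
    unfolding ampliate_def using cptp_carrier[OF E Xc] by (intro eq_matI) auto
  ultimately show ?thesis by simp
qed

lemma cptp_zero:
  assumes E: "cptp N E"
  shows "E (0\<^sub>m N N) = 0\<^sub>m N N"
proof -
  have "E ((0::complex) \<cdot>\<^sub>m 0\<^sub>m N N) = (0::complex) \<cdot>\<^sub>m E (0\<^sub>m N N)"
    by (rule cptp_smult[OF E]) simp
  moreover have "(0::complex) \<cdot>\<^sub>m 0\<^sub>m N N = 0\<^sub>m N N" by (intro eq_matI) auto
  moreover have "(0::complex) \<cdot>\<^sub>m E (0\<^sub>m N N) = 0\<^sub>m N N"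
    using cptp_carrier[OF E, of "0\<^sub>m N N"] by (intro eq_matI) auto
  ultimately show ?thesis by simp
qed

lemma cptp_sum:
  assumes E: "cptp N E" and S: "finite S" and X: "\<And>k. k \<in> S \<Longrightarrow> X k \<in> carrier_mat N N"
  shows "E (mat N N (\<lambda>(i, j). \<Sum>k\<in>S. X k $$ (i, j))) = mat N N (\<lambda>(i, j). \<Sum>k\<in>S. E (X k) $$ (i, j))"
  using S X
proof (induction S rule: finite_induct)
  case empty
  have "mat N N (\<lambda>(i, j). \<Sum>k\<in>{}. X k $$ (i, j)) = 0\<^sub>m N N"
    and "mat N N (\<lambda>(i, j). \<Sum>k\<in>{}. E (X k) $$ (i, j)) = 0\<^sub>m N N" by (auto intro: eq_matI)
  then show ?case by (simp only: cptp_zero[OF E])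
next
  case (insert x S)
  have Xx: "X x \<in> carrier_mat N N" using insert by simp
  have "mat N N (\<lambda>(i, j). \<Sum>k\<in>insert x S. X k $$ (i, j)) = X x + mat N N (\<lambda>(i, j). \<Sum>k\<in>S. X k $$ (i, j))"
    using insert Xx by (intro eq_matI) auto
  then have "E (mat N N (\<lambda>(i, j). \<Sum>k\<in>insert x S. X k $$ (i, j))) =
      E (X x) + E (mat N N (\<lambda>(i, j). \<Sum>k\<in>S. X k $$ (i, j)))"
    using cptp_add[OF E Xx] by simp
  also have "\<dots> = E (X x) + mat N N (\<lambda>(i, j). \<Sum>k\<in>S. E (X k) $$ (i, j))"
  proof -
    have "E (mat N N (\<lambda>(i, j). \<Sum>k\<in>S. X k $$ (i, j))) = mat N N (\<lambda>(i, j). \<Sum>k\<in>S. E (X k) $$ (i, j))"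
      using insert.IH insert.prems by blast
    then show ?thesis by (simp only:)
  qed
  also have "\<dots> = mat N N (\<lambda>(i, j). \<Sum>k\<in>insert x S. E (X k) $$ (i, j))"
    using insert cptp_carrier[OF E Xx] by (intro eq_matI) auto
  finally show ?case .
qed

lemma ketbra_eq_sum_emat:
  assumes v: "v \<in> carrier_vec N"
  shows "ketbra v = mat N N (\<lambda>(r, c). \<Sum>k\<in>{..<N} \<times> {..<N}.
      ((v $ fst k * cnj (v $ snd k)) \<cdot>\<^sub>m emat N (fst k) (snd k)) $$ (r, c))"
proof (rule eq_matI)
  fix r c assume "r < dim_row (mat N N (\<lambda>(r, c). \<Sum>k\<in>{..<N} \<times> {..<N}.
      ((v $ fst k * cnj (v $ snd k)) \<cdot>\<^sub>m emat N (fst k) (snd k)) $$ (r, c)))"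
    and "c < dim_col (mat N N (\<lambda>(r, c). \<Sum>k\<in>{..<N} \<times> {..<N}.
      ((v $ fst k * cnj (v $ snd k)) \<cdot>\<^sub>m emat N (fst k) (snd k)) $$ (r, c)))"
  then have r: "r < N" and c: "c < N" by auto
  have "(\<Sum>k\<in>{..<N} \<times> {..<N}. ((v $ fst k * cnj (v $ snd k)) \<cdot>\<^sub>m emat N (fst k) (snd k)) $$ (r, c))
     = (\<Sum>k\<in>{..<N} \<times> {..<N}. if k = (r, c) then v $ r * cnj (v $ c) else 0)"
    using r c by (intro sum.cong refl) (auto simp: emat_def)
  also have "\<dots> = ketbra v $$ (r, c)" using r c v by (simp add: sum.delta ketbra_entry)
  finally show "ketbra v $$ (r, c) = mat N N (\<lambda>(r, c). \<Sum>k\<in>{..<N} \<times> {..<N}.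
      ((v $ fst k * cnj (v $ snd k)) \<cdot>\<^sub>m emat N (fst k) (snd k)) $$ (r, c)) $$ (r, c)"
    using r c by simp
qed (use v in auto)

lemma cptp_ketbra_entry:
  assumes E: "cptp N E" and v: "v \<in> carrier_vec N" and y: "y < N" and x: "x < N"
  shows "E (ketbra v) $$ (y, x) = (\<Sum>j<N. \<Sum>i<N. v $ j * cnj (v $ i) * E (emat N j i) $$ (y, x))"
proof -
  have dims: "dim_row (E (emat N i j)) = N" "dim_col (E (emat N i j)) = N" for i j
    using cptp_carrier[OF E emat_carrier] by auto
  have "E (ketbra v) = mat N N (\<lambda>(r, c). \<Sum>k\<in>{..<N} \<times> {..<N}.
      E ((v $ fst k * cnj (v $ snd k)) \<cdot>\<^sub>m emat N (fst k) (snd k)) $$ (r, c))"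
    unfolding ketbra_eq_sum_emat[OF v] by (rule cptp_sum[OF E]) auto
  then have "E (ketbra v) $$ (y, x) = (\<Sum>k\<in>{..<N} \<times> {..<N}.
      v $ fst k * cnj (v $ snd k) * E (emat N (fst k) (snd k)) $$ (y, x))"
    using x y by (simp add: cptp_smult[OF E] dims)
  then show ?thesis by (simp add: sum.cartesian_product split_def)
qed

lemma hs_adjoint_dims [simp]: "dim_row (hs_adjoint N E M) = N" "dim_col (hs_adjoint N E M) = N"
  unfolding hs_adjoint_def by simp_all

lemma hs_adjoint_carrier [simp]: "hs_adjoint N E M \<in> carrier_mat N N"
  unfolding hs_adjoint_def by simp

lemma hs_adjoint_entry:
  assumes "cptp N E" "p < N" "q < N" "M \<in> carrier_mat N N"
  shows "hs_adjoint N E M $$ (p, q) = (\<Sum>x<N. \<Sum>y<N. M $$ (x, y) * E (emat N q p) $$ (y, x))"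
  unfolding hs_adjoint_def using assms cptp_carrier[OF assms(1) emat_carrier]
  by (simp add: mtrace_mult[OF assms(4)])

lemma qform_hs_adjoint_ketbra:
  assumes E: "cptp N E" and \<phi>: "\<phi> \<in> carrier_vec N" and v: "v \<in> carrier_vec N"
  shows "qform N (hs_adjoint N E (ketbra \<phi>)) v = qform N (E (ketbra v)) \<phi>"
proof -
  define T where "T i j y x = cnj (v $ i) * v $ j * (cnj (\<phi> $ y) * \<phi> $ x) * E (emat N j i) $$ (y, x)"
    for i j y x
  have "qform N (hs_adjoint N E (ketbra \<phi>)) v = (\<Sum>i<N. \<Sum>j<N. \<Sum>x<N. \<Sum>y<N. T i j y x)"
    unfolding qform_def T_def using \<phi>
    by (intro sum.cong refl)
       (simp add: hs_adjoint_entry[OF E] ketbra_entry sum_distrib_left sum_distrib_right mult_ac)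
  also have "\<dots> = (\<Sum>x<N. \<Sum>y<N. \<Sum>i<N. \<Sum>j<N. T i j y x)" by (rule sum_swap_pairs)
  also have "\<dots> = (\<Sum>y<N. \<Sum>x<N. \<Sum>j<N. \<Sum>i<N. T i j y x)"
    by (subst sum.swap) (intro sum.cong refl sum.swap)
  also have "\<dots> = qform N (E (ketbra v)) \<phi>"
    unfolding qform_def T_def using v
    by (intro sum.cong refl)
       (simp add: cptp_ketbra_entry[OF E] sum_distrib_left sum_distrib_right mult_ac)
  finally show ?thesis .
qed

lemma psd_hs_adjoint_ketbra:
  assumes E: "cptp N E" and \<phi>: "\<phi> \<in> carrier_vec N"
  shows "psd N (hs_adjoint N E (ketbra \<phi>))"
  unfolding psd_iff_qform
  using psd_qform[OF cptp_psd[OF E psd_ketbra] \<phi>] by (simp add: qform_hs_adjoint_ketbra[OF E \<phi>])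

lemma hs_adjoint_one:
  assumes E: "cptp N E"
  shows "hs_adjoint N E (1\<^sub>m N) = 1\<^sub>m N"
proof (rule eq_matI)
  fix p q assume "p < dim_row (1\<^sub>m N :: complex mat)" "q < dim_col (1\<^sub>m N :: complex mat)"
  then have p: "p < N" and q: "q < N" by auto
  have Ec: "E (emat N q p) \<in> carrier_mat N N" using cptp_carrier[OF E] by simp
  have "hs_adjoint N E (1\<^sub>m N) $$ (p, q) = mtrace (E (emat N q p))"
    unfolding hs_adjoint_def using p q Ec by simp
  also have "\<dots> = mtrace (emat N q p)" using cptp_mtrace[OF E] by simp
  also have "\<dots> = (\<Sum>x<N. if x = q \<and> x = p then 1 else 0)" unfolding mtrace_def emat_def by simp
  also have "\<dots> = (\<Sum>x<N. if x = q then (if p = q then 1 else 0) else 0)"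
    by (intro sum.cong) auto
  also have "\<dots> = 1\<^sub>m N $$ (p, q)" using p q by (simp add: sum.delta)
  finally show "hs_adjoint N E (1\<^sub>m N) $$ (p, q) = 1\<^sub>m N $$ (p, q)" .
qed (auto simp: hs_adjoint_def)

lemma hs_adjoint_sum_entries:
  assumes E: "cptp N E" and M: "M \<in> carrier_mat N N" and F: "\<And>k. k \<in> S \<Longrightarrow> F k \<in> carrier_mat N N"
    and M_eq: "\<And>x y. x < N \<Longrightarrow> y < N \<Longrightarrow> M $$ (x, y) = (\<Sum>k\<in>S. F k $$ (x, y))"
    and p: "p < N" and q: "q < N"
  shows "hs_adjoint N E M $$ (p, q) = (\<Sum>k\<in>S. hs_adjoint N E (F k) $$ (p, q))"
proof -
  have "hs_adjoint N E M $$ (p, q) = (\<Sum>x<N. \<Sum>y<N. \<Sum>k\<in>S. F k $$ (x, y) * E (emat N q p) $$ (y, x))"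
    unfolding hs_adjoint_entry[OF E p q M] by (intro sum.cong refl) (simp add: M_eq sum_distrib_right)
  also have "\<dots> = (\<Sum>k\<in>S. \<Sum>x<N. \<Sum>y<N. F k $$ (x, y) * E (emat N q p) $$ (y, x))"
    by (rule sum_pull_innermost)
  also have "\<dots> = (\<Sum>k\<in>S. hs_adjoint N E (F k) $$ (p, q))"
    using F by (intro sum.cong refl) (simp add: hs_adjoint_entry[OF E p q])
  finally show ?thesis .
qed

lemma hs_adjoint_smult:
  assumes E: "cptp N E" and M: "M \<in> carrier_mat N N"
  shows "hs_adjoint N E (c \<cdot>\<^sub>m M) = c \<cdot>\<^sub>m hs_adjoint N E M"
proof (rule eq_matI)
  fix p q assume "p < dim_row (c \<cdot>\<^sub>m hs_adjoint N E M)" "q < dim_col (c \<cdot>\<^sub>m hs_adjoint N E M)"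
  then have p: "p < N" and q: "q < N" by auto
  have cM: "c \<cdot>\<^sub>m M \<in> carrier_mat N N" using M by simp
  show "hs_adjoint N E (c \<cdot>\<^sub>m M) $$ (p, q) = (c \<cdot>\<^sub>m hs_adjoint N E M) $$ (p, q)"
    unfolding hs_adjoint_entry[OF E p q cM] using p q M
    by (simp add: hs_adjoint_entry[OF E p q M] sum_distrib_left mult_ac)
qed (auto simp: hs_adjoint_def)

section \<open>Tensor products\<close>

lemma kron_dims [simp]:
  "dim_row (kron A B) = dim_row A * dim_row B" "dim_col (kron A B) = dim_col A * dim_col B"
  unfolding kron_def by simp_all

lemma kron_carrier [simp]:
  "A \<in> carrier_mat N N \<Longrightarrow> B \<in> carrier_mat N N \<Longrightarrow> kron A B \<in> carrier_mat (N * N) (N * N)"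
  unfolding kron_def by simp

lemma kron_entry:
  assumes "A \<in> carrier_mat N N" "B \<in> carrier_mat N N" "r < N * N" "c < N * N"
  shows "kron A B $$ (r, c) = A $$ (r div N, c div N) * B $$ (r mod N, c mod N)"
  using assms unfolding kron_def by simp

lemma kron_smult:
  assumes "A \<in> carrier_mat N N" "B \<in> carrier_mat N N"
  shows "kron (a \<cdot>\<^sub>m A) (b \<cdot>\<^sub>m B) = (a * b) \<cdot>\<^sub>m kron A B"
  using assms by (intro eq_matI) (auto simp: kron_entry[where N = N] div_mod_less_square)

lemma kron_ketbra:
  assumes "a \<in> carrier_vec N" "b \<in> carrier_vec N"
  shows "kron (ketbra a) (ketbra b) = ketbra (vec (N * N) (\<lambda>r. a $ (r div N) * b $ (r mod N)))"
  using assms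
  by (intro eq_matI) (auto simp: kron_entry[where N = N] ketbra_entry div_mod_less_square)

lemma kron_one: "kron (1\<^sub>m N) (1\<^sub>m N) = 1\<^sub>m (N * N)"
proof (rule eq_matI)
  fix r c assume "r < dim_row (1\<^sub>m (N * N) :: complex mat)" "c < dim_col (1\<^sub>m (N * N) :: complex mat)"
  then have r: "r < N * N" and c: "c < N * N" by auto
  have "r div N = c div N \<and> r mod N = c mod N \<longleftrightarrow> r = c" by (metis div_mult_mod_eq)
  then show "kron (1\<^sub>m N) (1\<^sub>m N) $$ (r, c) = 1\<^sub>m (N * N) $$ (r, c)"
    using r c div_mod_less_square[OF r] div_mod_less_square[OF c] by (auto simp: kron_entry[where N = N])
qed auto

lemma qform_sum_entries:
  assumes "\<And>r c. r < n \<Longrightarrow> c < n \<Longrightarrow> K $$ (r, c) = (\<Sum>k\<in>S. F k $$ (r, c))"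
  shows "qform n K v = (\<Sum>k\<in>S. qform n (F k) v)"
proof -
  have "qform n K v = (\<Sum>i<n. \<Sum>j<n. \<Sum>k\<in>S. cnj (v $ i) * F k $$ (i, j) * v $ j)"
    unfolding qform_def by (simp add: assms sum_distrib_left sum_distrib_right)
  also have "\<dots> = (\<Sum>k\<in>S. qform n (F k) v)"
    unfolding qform_def by (rule sum_pull_innermost)
  finally show ?thesis .
qed

lemma qform_kron_sum_entries:
  assumes A: "A \<in> carrier_mat N N" and B: "B \<in> carrier_mat N N"
    and FA: "\<And>k. k \<in> S1 \<Longrightarrow> FA k \<in> carrier_mat N N"
    and FB: "\<And>l. l \<in> S2 \<Longrightarrow> FB l \<in> carrier_mat N N"
    and A_eq: "\<And>i j. i < N \<Longrightarrow> j < N \<Longrightarrow> A $$ (i, j) = (\<Sum>k\<in>S1. FA k $$ (i, j))"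
    and B_eq: "\<And>i j. i < N \<Longrightarrow> j < N \<Longrightarrow> B $$ (i, j) = (\<Sum>l\<in>S2. FB l $$ (i, j))"
  shows "qform (N * N) (kron A B) \<psi> = (\<Sum>k\<in>S1. \<Sum>l\<in>S2. qform (N * N) (kron (FA k) (FB l)) \<psi>)"
proof -
  have "qform (N * N) (kron A B) \<psi> = (\<Sum>kl\<in>S1 \<times> S2. qform (N * N) (kron (FA (fst kl)) (FB (snd kl))) \<psi>)"
  proof (rule qform_sum_entries)
    fix r c assume r: "r < N * N" and c: "c < N * N"
    note bounds = div_mod_less_square[OF r] div_mod_less_square[OF c]
    have "kron A B $$ (r, c) =
        (\<Sum>k\<in>S1. FA k $$ (r div N, c div N)) * (\<Sum>l\<in>S2. FB l $$ (r mod N, c mod N))"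
      using bounds by (simp add: kron_entry[OF A B r c] A_eq B_eq)
    also have "\<dots> = (\<Sum>kl\<in>S1 \<times> S2. FA (fst kl) $$ (r div N, c div N) * FB (snd kl) $$ (r mod N, c mod N))"
      by (simp add: sum_product sum.cartesian_product split_def)
    also have "\<dots> = (\<Sum>kl\<in>S1 \<times> S2. kron (FA (fst kl)) (FB (snd kl)) $$ (r, c))"
      using r c FA FB by (intro sum.cong refl) (auto simp: kron_entry[where N = N])
    finally show "kron A B $$ (r, c) = (\<Sum>kl\<in>S1 \<times> S2. kron (FA (fst kl)) (FB (snd kl)) $$ (r, c))" .
  qed
  then show ?thesis by (simp add: sum.cartesian_product split_def)
qed

lemma psd_kron:
  assumes A: "psd N A" and B: "psd N B"
  shows "psd (N * N) (kron A B)"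
  unfolding psd_iff_qform
proof (intro conjI ballI)
  show "kron A B \<in> carrier_mat (N * N) (N * N)" using psd_carrier[OF A] psd_carrier[OF B] by simp
  fix \<psi> :: "complex vec"
  obtain m1 us1 where d1: "rank_one_decomp N A m1 us1" using psd_rank_one_decomp[OF A] by blast
  obtain m2 us2 where d2: "rank_one_decomp N B m2 us2" using psd_rank_one_decomp[OF B] by blast
  have "qform (N * N) (kron A B) \<psi> =
      (\<Sum>k<m1. \<Sum>l<m2. qform (N * N) (kron (ketbra (us1 k)) (ketbra (us2 l))) \<psi>)"
    using psd_carrier[OF A] psd_carrier[OF B] rank_one_decomp_carrier[OF d1] rank_one_decomp_carrier[OF d2]
    by (intro qform_kron_sum_entries) (simp_all add: rank_one_decomp_entry[OF d1] rank_one_decomp_entry[OF d2])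
  also have "\<dots> = (\<Sum>k<m1. \<Sum>l<m2. qform (N * N)
      (ketbra (vec (N * N) (\<lambda>r. us1 k $ (r div N) * us2 l $ (r mod N)))) \<psi>)"
    by (intro sum.cong refl)
       (simp add: kron_ketbra[OF rank_one_decomp_carrier[OF d1] rank_one_decomp_carrier[OF d2]])
  finally have eq: "qform (N * N) (kron A B) \<psi> = \<dots>" .
  show "Im (qform (N * N) (kron A B) \<psi>) = 0" "Re (qform (N * N) (kron A B) \<psi>) \<ge> 0"
    unfolding eq Im_sum Re_sum by (simp_all add: qform_ketbra sum_nonneg)
qed

lemma sum_swap_2_4:
  "(\<Sum>r\<in>R. \<Sum>c\<in>C. \<Sum>i\<in>I. \<Sum>j\<in>J. \<Sum>k\<in>K. \<Sum>l\<in>L. f r c i j k l) =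
   (\<Sum>i\<in>I. \<Sum>j\<in>J. \<Sum>k\<in>K. \<Sum>l\<in>L. \<Sum>r\<in>R. \<Sum>c\<in>C. f r c i j k l)"
  apply (subst sum_pull_innermost, rule sum.cong[OF refl])
  apply (subst sum_pull_innermost, rule sum.cong[OF refl])
  apply (subst sum_pull_innermost, rule sum.cong[OF refl])
  apply (subst sum_pull_innermost, rule refl)
  done

lemma mtrace_kron_mult:
  assumes A: "A \<in> carrier_mat N N" and B: "B \<in> carrier_mat N N" and Z: "Z \<in> carrier_mat (N * N) (N * N)"
  shows "mtrace (kron A B * Z) =
    (\<Sum>i<N. \<Sum>k<N. \<Sum>j<N. \<Sum>l<N. Z $$ (i * N + k, j * N + l) * (A $$ (j, i) * B $$ (l, k)))"
proof -
  have "mtrace (kron A B * Z) = (\<Sum>c<N * N. \<Sum>r<N * N. Z $$ (c, r) * kron A B $$ (r, c))"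
    unfolding mtrace_mult[OF kron_carrier[OF A B] Z] by (subst sum.swap) (simp add: mult.commute)
  also have "\<dots> = (\<Sum>c<N * N. \<Sum>r<N * N. (\<lambda>i k j l. Z $$ (i * N + k, j * N + l) * (A $$ (j, i) * B $$ (l, k)))
      (c div N) (c mod N) (r div N) (r mod N))"
    by (intro sum.cong refl) (simp add: kron_entry[OF A B] div_mod_less_square)
  also have "\<dots> = (\<Sum>i<N. \<Sum>k<N. \<Sum>j<N. \<Sum>l<N. Z $$ (i * N + k, j * N + l) * (A $$ (j, i) * B $$ (l, k)))"
    by (rule sum_index_pairs2)
  finally show ?thesis .
qed

lemma mtrace_kron_prod_channel_expand:
  assumes EA: "cptp N EA" and EB: "cptp N EB"
    and MA: "MA \<in> carrier_mat N N" and MB: "MB \<in> carrier_mat N N"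
  shows "mtrace (kron MA MB * prod_channel N EA EB Z) =
    (\<Sum>i<N. \<Sum>k<N. \<Sum>j<N. \<Sum>l<N. Z $$ (i * N + k, j * N + l) *
       (hs_adjoint N EA MA $$ (j, i) * hs_adjoint N EB MB $$ (l, k)))"
proof -
  define T where "T r c i j k l = kron MA MB $$ (r, c) * (Z $$ (i * N + k, j * N + l) *
      EA (emat N i j) $$ (c div N, r div N) * EB (emat N k l) $$ (c mod N, r mod N))" for r c i j k l
  have PC: "prod_channel N EA EB Z \<in> carrier_mat (N * N) (N * N)" unfolding prod_channel_def by simp
  have "mtrace (kron MA MB * prod_channel N EA EB Z) =
      (\<Sum>r<N * N. \<Sum>c<N * N. \<Sum>i<N. \<Sum>j<N. \<Sum>k<N. \<Sum>l<N. T r c i j k l)"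
    unfolding mtrace_mult[OF kron_carrier[OF MA MB] PC] T_def
    by (auto simp: prod_channel_def sum_distrib_left intro!: sum.cong)
  also have "\<dots> = (\<Sum>i<N. \<Sum>j<N. \<Sum>k<N. \<Sum>l<N. \<Sum>r<N * N. \<Sum>c<N * N. T r c i j k l)"
    by (rule sum_swap_2_4)
  also have "\<dots> = (\<Sum>i<N. \<Sum>j<N. \<Sum>k<N. \<Sum>l<N. Z $$ (i * N + k, j * N + l) *
      (hs_adjoint N EA MA $$ (j, i) * hs_adjoint N EB MB $$ (l, k)))"
  proof (intro sum.cong refl)
    fix i j k l assume "i \<in> {..<N}" "j \<in> {..<N}" "k \<in> {..<N}" "l \<in> {..<N}"
    then have ijkl: "i < N" "j < N" "k < N" "l < N" by auto
    have "(\<Sum>r<N * N. \<Sum>c<N * N. T r c i j k l) = (\<Sum>r<N * N. \<Sum>c<N * N.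
        (\<lambda>x x' y y'. Z $$ (i * N + k, j * N + l) * ((MA $$ (x, y) * EA (emat N i j) $$ (y, x)) *
          (MB $$ (x', y') * EB (emat N k l) $$ (y', x')))) (r div N) (r mod N) (c div N) (c mod N))"
      unfolding T_def by (intro sum.cong refl) (simp add: kron_entry[OF MA MB] mult_ac)
    also have "\<dots> = (\<Sum>x<N. \<Sum>x'<N. \<Sum>y<N. \<Sum>y'<N. Z $$ (i * N + k, j * N + l) *
        ((MA $$ (x, y) * EA (emat N i j) $$ (y, x)) * (MB $$ (x', y') * EB (emat N k l) $$ (y', x'))))"
      by (rule sum_index_pairs2)
    also have "\<dots> = Z $$ (i * N + k, j * N + l) *
        ((\<Sum>x<N. \<Sum>y<N. MA $$ (x, y) * EA (emat N i j) $$ (y, x)) *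
         (\<Sum>x'<N. \<Sum>y'<N. MB $$ (x', y') * EB (emat N k l) $$ (y', x')))"
      by (simp only: sum_product) (simp only: sum_distrib_left)
    also have "\<dots> = Z $$ (i * N + k, j * N + l) *
        (hs_adjoint N EA MA $$ (j, i) * hs_adjoint N EB MB $$ (l, k))"
      by (simp only: hs_adjoint_entry[OF EA ijkl(2,1) MA] hs_adjoint_entry[OF EB ijkl(4,3) MB])
    finally show "(\<Sum>r<N * N. \<Sum>c<N * N. T r c i j k l) = Z $$ (i * N + k, j * N + l) *
        (hs_adjoint N EA MA $$ (j, i) * hs_adjoint N EB MB $$ (l, k))" .
  qed
  also have "\<dots> = (\<Sum>i<N. \<Sum>k<N. \<Sum>j<N. \<Sum>l<N. Z $$ (i * N + k, j * N + l) *
      (hs_adjoint N EA MA $$ (j, i) * hs_adjoint N EB MB $$ (l, k)))"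
    by (intro sum.cong refl sum.swap)
  finally show ?thesis .
qed

lemma mtrace_kron_prod_channel:
  assumes "cptp N EA" "cptp N EB" "MA \<in> carrier_mat N N" "MB \<in> carrier_mat N N"
    and "Z \<in> carrier_mat (N * N) (N * N)"
  shows "mtrace (kron MA MB * prod_channel N EA EB Z) =
         mtrace (kron (hs_adjoint N EA MA) (hs_adjoint N EB MB) * Z)"
  unfolding mtrace_kron_prod_channel_expand[OF assms(1-4)]
    mtrace_kron_mult[OF hs_adjoint_carrier hs_adjoint_carrier assms(5)] ..

section \<open>The entanglement-constrained domain\<close>

lemma Hs_memE:
  assumes "\<rho> \<in> Hs N s"
  obtains \<psi> where "\<rho> = ketbra \<psi>" "is_unit_vector (N * N) \<psi>"
  using assms unfolding Hs_def by blast

lemma Hs_carrier: "\<rho> \<in> Hs N s \<Longrightarrow> \<rho> \<in> carrier_mat (N * N) (N * N)"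
  by (auto elim!: Hs_memE dest: is_unit_vector_carrier)

lemma vn_entropy_maximally_mixed:
  assumes N: "N \<ge> 1"
  shows "vn_entropy (mat N N (\<lambda>(a, b). if a = b then complex_of_real (1 / real N) else 0)) = ln (real N)"
proof -
  define x where "x = complex_of_real (1 / real N)"
  define D where "D = mat N N (\<lambda>(a, b). if a = b then x else 0)"
  have "diag_mat D = map (\<lambda>_. x) [0..<N]"
    unfolding diag_mat_def D_def by (intro map_cong) auto
  then have "char_poly D = [:- x, 1:] ^ N"
    using char_poly_upper_triangular[of D N]
    by (simp add: D_def upper_triangular_def map_replicate_const prod_list_replicate)
  then have "proots (char_poly D) = replicate_mset N x"
    using proots_linear_factor[of "- x"] by (simp add: proots_power repeat_mset_replicate_mset)
  moreover have "real N > 0" using N by simp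
  ultimately have "vn_entropy D = - (real N * (1 / real N * ln (1 / real N)))"
    unfolding vn_entropy_def by (simp add: x_def sum_mset_replicate_mset)
  also have "\<dots> = ln (real N)" using N by (simp add: ln_div)
  finally show ?thesis unfolding D_def x_def .
qed

text \<open>The maximally entangled state \<open>N\<^sup>-\<^sup>1\<^sup>/\<^sup>2 \<Sum>\<^sub>a |a\<rangle> \<otimes> |a\<rangle>\<close> has entanglement entropy \<open>ln N\<close>.\<close>
lemma Hs_nonempty:
  assumes N: "N \<ge> 1" and s: "s \<le> ln (real N)"
  shows "Hs N s \<noteq> {}"
proof -
  define c where "c = 1 / sqrt (real N)"
  have Np: "real N > 0" using N by simp
  have cc: "c * c = 1 / real N" unfolding c_def using Np by (simp add: real_sqrt_mult[symmetric])
  define \<psi> where "\<psi> = vec (N * N) (\<lambda>r. if r div N = r mod N then complex_of_real c else 0)"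
  have \<psi>_entry: "\<psi> $ (p * N + q) = (if p = q then complex_of_real c else 0)" if "p < N" "q < N" for p q
    unfolding \<psi>_def using that index_pair_less[OF that] by simp
  have "(\<Sum>r<N * N. (cmod (\<psi> $ r))\<^sup>2) = (\<Sum>p<N. \<Sum>q<N. (cmod (\<psi> $ (p * N + q)))\<^sup>2)"
    by (rule sum_index_pairs)
  also have "\<dots> = (\<Sum>p<N. \<Sum>q<N. if q = p then c * c else 0)"
    by (intro sum.cong refl) (auto simp: \<psi>_entry power2_eq_square)
  also have "\<dots> = 1" using cc Np by simp
  finally have unit: "is_unit_vector (N * N) \<psi>" unfolding is_unit_vector_def \<psi>_def by simp
  have "ptrace_B N (ketbra \<psi>) = mat N N (\<lambda>(a, b). if a = b then complex_of_real (1 / real N) else 0)"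
  proof (rule eq_matI)
    fix a b assume "a < dim_row (mat N N (\<lambda>(a, b). if a = b then complex_of_real (1 / real N) else 0))"
      and "b < dim_col (mat N N (\<lambda>(a, b). if a = b then complex_of_real (1 / real N) else 0))"
    then have a: "a < N" and b: "b < N" by auto
    have "ptrace_B N (ketbra \<psi>) $$ (a, b) = (\<Sum>q<N. \<psi> $ (a * N + q) * cnj (\<psi> $ (b * N + q)))"
      unfolding ptrace_B_def using a b index_pair_less[OF a] index_pair_less[OF b]
      by (simp add: ketbra_def \<psi>_def)
    also have "\<dots> = (\<Sum>q<N. if q = a then (if a = b then complex_of_real (c * c) else 0) else 0)"
      using a b by (intro sum.cong refl) (auto simp: \<psi>_entry)
    also have "\<dots> = (if a = b then complex_of_real (1 / real N) else 0)" using a cc by simp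
    finally show "ptrace_B N (ketbra \<psi>) $$ (a, b) =
        mat N N (\<lambda>(a, b). if a = b then complex_of_real (1 / real N) else 0) $$ (a, b)"
      using a b by simp
  qed (auto simp: ptrace_B_def)
  then have "ent_entropy N \<psi> = ln (real N)"
    unfolding ent_entropy_def using vn_entropy_maximally_mixed[OF N] by simp
  then have "ketbra \<psi> \<in> Hs N s" unfolding Hs_def using unit s by auto
  then show ?thesis by blast
qed

lemma unit_vector_entry_le_1: "is_unit_vector n \<psi> \<Longrightarrow> i < n \<Longrightarrow> cmod (\<psi> $ i) \<le> 1"
proof -
  assume u: "is_unit_vector n \<psi>" and i: "i < n"
  have "(cmod (\<psi> $ i))\<^sup>2 \<le> (\<Sum>j<n. (cmod (\<psi> $ j))\<^sup>2)" using i by (intro member_le_sum) auto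
  also have "\<dots> = 1" using u unfolding is_unit_vector_def by blast
  finally show ?thesis by (simp add: power_le_one_iff abs_square_le_1)
qed

lemma qform_unit_bound:
  assumes u: "is_unit_vector n \<psi>"
  shows "\<bar>Re (qform n K \<psi>)\<bar> \<le> (\<Sum>i<n. \<Sum>j<n. cmod (K $$ (i, j)))"
proof -
  have "\<bar>Re (qform n K \<psi>)\<bar> \<le> cmod (qform n K \<psi>)" by (rule abs_Re_le_cmod)
  also have "\<dots> \<le> (\<Sum>i<n. \<Sum>j<n. cmod (cnj (\<psi> $ i) * K $$ (i, j) * \<psi> $ j))"
    unfolding qform_def by (intro order_trans[OF norm_sum] sum_mono norm_sum)
  also have "\<dots> \<le> (\<Sum>i<n. \<Sum>j<n. cmod (K $$ (i, j)))"
  proof (intro sum_mono)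
    fix i j assume "i \<in> {..<n}" "j \<in> {..<n}"
    then have "cmod (\<psi> $ i) \<le> 1" "cmod (\<psi> $ j) \<le> 1" using unit_vector_entry_le_1[OF u] by auto
    then have "cmod (\<psi> $ i) * cmod (K $$ (i, j)) * cmod (\<psi> $ j) \<le> 1 * cmod (K $$ (i, j)) * 1"
      by (intro mult_mono) auto
    then show "cmod (cnj (\<psi> $ i) * K $$ (i, j) * \<psi> $ j) \<le> cmod (K $$ (i, j))" by (simp add: norm_mult)
  qed
  finally show ?thesis .
qed

lemma psd_mtrace_Hs_nonneg: "psd (N * N) K \<Longrightarrow> \<rho> \<in> Hs N s \<Longrightarrow> 0 \<le> Re (mtrace (K * \<rho>))"
  by (auto elim!: Hs_memE simp: mtrace_ketbra[OF psd_carrier] is_unit_vector_carrier psd_qform)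

lemma psd_Hs_values_bdd:
  assumes K: "psd (N * N) K"
  shows "bdd_above ((\<lambda>\<rho>. Re (mtrace (K * \<rho>))) ` Hs N s)"
    and "bdd_below ((\<lambda>\<rho>. Re (mtrace (K * \<rho>))) ` Hs N s)"
proof -
  have "Re (mtrace (K * \<rho>)) \<le> (\<Sum>i<N * N. \<Sum>j<N * N. cmod (K $$ (i, j)))" if "\<rho> \<in> Hs N s" for \<rho>
  proof -
    obtain \<psi> where \<rho>: "\<rho> = ketbra \<psi>" and \<psi>: "is_unit_vector (N * N) \<psi>"
      using \<open>\<rho> \<in> Hs N s\<close> by (rule Hs_memE)
    have "Re (qform (N * N) K \<psi>) \<le> (\<Sum>i<N * N. \<Sum>j<N * N. cmod (K $$ (i, j)))"
      using qform_unit_bound[OF \<psi>] by (rule abs_le_D1)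
    then show ?thesis
      unfolding \<rho> mtrace_ketbra[OF psd_carrier[OF K] is_unit_vector_carrier[OF \<psi>]] .
  qed
  then show "bdd_above ((\<lambda>\<rho>. Re (mtrace (K * \<rho>))) ` Hs N s)"
    by (intro bdd_aboveI[where M = "\<Sum>i<N * N. \<Sum>j<N * N. cmod (K $$ (i, j))"]) auto
  show "bdd_below ((\<lambda>\<rho>. Re (mtrace (K * \<rho>))) ` Hs N s)"
    using psd_mtrace_Hs_nonneg[OF K] by (intro bdd_belowI[where m = 0]) auto
qed

lemma Jmin_le_Jmax:
  assumes "psd (N * N) K" "\<rho> \<in> Hs N s"
  shows "Jmin N K s \<le> Re (mtrace (K * \<rho>))" "Re (mtrace (K * \<rho>)) \<le> Jmax N K s"
  unfolding Jmin_def Jmax_def using psd_Hs_values_bdd[OF assms(1)] assms(2)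
  by (auto intro: cInf_lower cSup_upper)

lemma Jmax_le:
  "Hs N s \<noteq> {} \<Longrightarrow> (\<And>\<rho>. \<rho> \<in> Hs N s \<Longrightarrow> Re (mtrace (K * \<rho>)) \<le> b) \<Longrightarrow> Jmax N K s \<le> b"
  unfolding Jmax_def by (auto intro: cSup_least)

lemma le_Jmin:
  "Hs N s \<noteq> {} \<Longrightarrow> (\<And>\<rho>. \<rho> \<in> Hs N s \<Longrightarrow> b \<le> Re (mtrace (K * \<rho>))) \<Longrightarrow> b \<le> Jmin N K s"
  unfolding Jmin_def by (auto intro: cInf_greatest)

lemma J_ratio_ge_one:
  assumes K: "psd (N * N) K" and ne: "Hs N s \<noteq> {}"
  shows "1 \<le> J_ratio N K s"
proof -
  obtain \<rho> where "\<rho> \<in> Hs N s" using ne by blast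
  then have "Jmin N K s \<le> Jmax N K s" using Jmin_le_Jmax[OF K] by (meson order_trans)
  then show ?thesis unfolding J_ratio_def by simp
qed

lemma J_ratio_le_iff:
  assumes K: "psd (N * N) K" and ne: "Hs N s \<noteq> {}" and r: "r \<ge> 1"
  shows "J_ratio N K s \<le> ereal r \<longleftrightarrow>
    (\<forall>\<rho>\<in>Hs N s. \<forall>\<rho>'\<in>Hs N s. Re (mtrace (K * \<rho>)) \<le> r * Re (mtrace (K * \<rho>')))"
proof
  assume R: "J_ratio N K s \<le> ereal r"
  have "Jmax N K s \<le> r * Jmin N K s"
  proof (cases "Jmin N K s > 0")
    case True
    then show ?thesis using R unfolding J_ratio_def by (simp add: field_simps)
  next
    case False
    moreover have "0 \<le> Jmin N K s" using le_Jmin[OF ne] psd_mtrace_Hs_nonneg[OF K] by blast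
    ultimately show ?thesis using R unfolding J_ratio_def by (auto split: if_splits)
  qed
  then show "\<forall>\<rho>\<in>Hs N s. \<forall>\<rho>'\<in>Hs N s. Re (mtrace (K * \<rho>)) \<le> r * Re (mtrace (K * \<rho>'))"
    using Jmin_le_Jmax[OF K] r by (meson mult_left_mono order_trans zero_le_one)
next
  assume H: "\<forall>\<rho>\<in>Hs N s. \<forall>\<rho>'\<in>Hs N s. Re (mtrace (K * \<rho>)) \<le> r * Re (mtrace (K * \<rho>'))"
  have "Jmax N K s / r \<le> Re (mtrace (K * \<rho>'))" if "\<rho>' \<in> Hs N s" for \<rho>'
    using Jmax_le[OF ne] H that r by (simp add: divide_le_eq mult.commute)
  then have "Jmax N K s / r \<le> Jmin N K s" by (rule le_Jmin[OF ne])
  then have M: "Jmax N K s \<le> r * Jmin N K s" using r by (simp add: divide_le_eq mult.commute)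
  show "J_ratio N K s \<le> ereal r"
  proof (cases "Jmin N K s > 0")
    case True
    then show ?thesis using M unfolding J_ratio_def by (simp add: divide_le_eq mult.commute)
  next
    case False
    then have "Jmax N K s \<le> 0" using M r by (meson mult_le_0_iff not_less order_trans zero_le_one)
    then show ?thesis using False r unfolding J_ratio_def by simp
  qed
qed

section \<open>Local measurements\<close>

lemma K_phi_carrier [simp]: "K_phi N EA EB \<phi>a \<phi>b \<in> carrier_mat (N * N) (N * N)"
  unfolding K_phi_def by simp

lemma psd_K_phi:
  "cptp N EA \<Longrightarrow> cptp N EB \<Longrightarrow> \<phi>a \<in> carrier_vec N \<Longrightarrow> \<phi>b \<in> carrier_vec N \<Longrightarrow>
   psd (N * N) (K_phi N EA EB \<phi>a \<phi>b)"
  unfolding K_phi_def by (intro psd_kron psd_hs_adjoint_ketbra)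

lemma povm_trivial: "povm N 1 (\<lambda>_. 1\<^sub>m N)"
  unfolding povm_def using psd_one by auto

lemma povm_ketbra_complement:
  assumes u: "is_unit_vector N \<phi>"
  shows "povm N 2 (\<lambda>i. if i = 0 then ketbra \<phi> else 1\<^sub>m N - ketbra \<phi>)"
  unfolding povm_def
proof (intro conjI allI impI)
  have \<phi>: "\<phi> \<in> carrier_vec N" using is_unit_vector_carrier[OF u] .
  fix i :: nat
  show "psd N (if i = 0 then ketbra \<phi> else 1\<^sub>m N - ketbra \<phi>)"
    using psd_ketbra[OF \<phi>] psd_one_minus_ketbra[OF u] by simp
  fix r c assume "r < N" "c < N"
  then show "(\<Sum>i<(2::nat). (if i = 0 then ketbra \<phi> else 1\<^sub>m N - ketbra \<phi>) $$ (r, c)) = (if r = c then 1 else 0)"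
    using \<phi> by (simp add: numeral_2_eq_2)
qed

lemma lm_prob_eq_sum_adjoint:
  assumes "cptp N EA" "cptp N EB" "\<rho> \<in> Hs N s"
    and "\<And>a b. (a, b) \<in> T \<Longrightarrow> MA a \<in> carrier_mat N N \<and> MB b \<in> carrier_mat N N"
  shows "lm_prob N EA EB MA MB \<rho> T =
    (\<Sum>(a, b)\<in>T. Re (mtrace (kron (hs_adjoint N EA (MA a)) (hs_adjoint N EB (MB b)) * \<rho>)))"
  unfolding lm_prob_def using assms
  by (intro sum.cong refl) (auto simp: mtrace_kron_prod_channel Hs_carrier)

lemma eclm_qldpD:
  assumes "eclm_qldp N EA EB s \<epsilon>" "povm N ma MA" "povm N mb MB" "\<rho> \<in> Hs N s" "\<rho>' \<in> Hs N s"
    and "T \<subseteq> {..<ma} \<times> {..<mb}"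
  shows "lm_prob N EA EB MA MB \<rho> T \<le> exp \<epsilon> * lm_prob N EA EB MA MB \<rho>' T"
  using assms unfolding eclm_qldp_def by blast

lemma eclm_qldp_exp_ge_one:
  assumes EA: "cptp N EA" and EB: "cptp N EB" and ne: "Hs N s \<noteq> {}"
    and adm: "eclm_qldp N EA EB s \<epsilon>"
  shows "1 \<le> exp \<epsilon>"
proof -
  obtain \<rho> where \<rho>: "\<rho> \<in> Hs N s" using ne by blast
  then obtain \<psi> where \<rho>_eq: "\<rho> = ketbra \<psi>" and \<psi>: "is_unit_vector (N * N) \<psi>" by (rule Hs_memE)
  have "lm_prob N EA EB (\<lambda>_. 1\<^sub>m N) (\<lambda>_. 1\<^sub>m N) \<rho> {(0, 0)} = Re (mtrace (1\<^sub>m (N * N) * \<rho>))"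
    using lm_prob_eq_sum_adjoint[OF EA EB \<rho>]
    by (simp add: hs_adjoint_one[OF EA] hs_adjoint_one[OF EB] kron_one)
  also have "\<dots> = 1"
    unfolding \<rho>_eq mtrace_ketbra[OF one_carrier_mat is_unit_vector_carrier[OF \<psi>]] qform_one_unit[OF \<psi>]
    by simp
  finally have "lm_prob N EA EB (\<lambda>_. 1\<^sub>m N) (\<lambda>_. 1\<^sub>m N) \<rho> {(0, 0)} = 1" .
  moreover have "lm_prob N EA EB (\<lambda>_. 1\<^sub>m N) (\<lambda>_. 1\<^sub>m N) \<rho> {(0, 0)} \<le>
      exp \<epsilon> * lm_prob N EA EB (\<lambda>_. 1\<^sub>m N) (\<lambda>_. 1\<^sub>m N) \<rho> {(0, 0)}"
    by (rule eclm_qldpD[OF adm povm_trivial povm_trivial \<rho> \<rho>]) simp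
  ultimately show ?thesis by simp
qed

lemma eclm_qldp_J_ratio_le:
  assumes EA: "cptp N EA" and EB: "cptp N EB" and ne: "Hs N s \<noteq> {}"
    and adm: "eclm_qldp N EA EB s \<epsilon>"
    and a: "is_unit_vector N \<phi>a" and b: "is_unit_vector N \<phi>b"
  shows "J_ratio N (K_phi N EA EB \<phi>a \<phi>b) s \<le> ereal (exp \<epsilon>)"
proof -
  let ?MA = "\<lambda>i::nat. if i = 0 then ketbra \<phi>a else 1\<^sub>m N - ketbra \<phi>a"
  let ?MB = "\<lambda>i::nat. if i = 0 then ketbra \<phi>b else 1\<^sub>m N - ketbra \<phi>b"
  have prob: "lm_prob N EA EB ?MA ?MB \<rho> {(0, 0)} = Re (mtrace (K_phi N EA EB \<phi>a \<phi>b * \<rho>))"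
    if "\<rho> \<in> Hs N s" for \<rho>
  proof -
    have "lm_prob N EA EB ?MA ?MB \<rho> {(0, 0)} =
        (\<Sum>(i, j)\<in>{(0, 0)}. Re (mtrace (kron (hs_adjoint N EA (?MA i)) (hs_adjoint N EB (?MB j)) * \<rho>)))"
      using is_unit_vector_carrier[OF a] is_unit_vector_carrier[OF b]
      by (intro lm_prob_eq_sum_adjoint[OF EA EB that]) auto
    then show ?thesis by (simp add: K_phi_def)
  qed
  have "lm_prob N EA EB ?MA ?MB \<rho> {(0, 0)} \<le> exp \<epsilon> * lm_prob N EA EB ?MA ?MB \<rho>' {(0, 0)}"
    if "\<rho> \<in> Hs N s" "\<rho>' \<in> Hs N s" for \<rho> \<rho>'
    by (rule eclm_qldpD[OF adm povm_ketbra_complement[OF a] povm_ketbra_complement[OF b] that]) simp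
  then have "\<forall>\<rho>\<in>Hs N s. \<forall>\<rho>'\<in>Hs N s. Re (mtrace (K_phi N EA EB \<phi>a \<phi>b * \<rho>)) \<le>
      exp \<epsilon> * Re (mtrace (K_phi N EA EB \<phi>a \<phi>b * \<rho>'))"
    by (simp add: prob)
  then show ?thesis
    by (rule J_ratio_le_iff[OF psd_K_phi[OF EA EB is_unit_vector_carrier[OF a] is_unit_vector_carrier[OF b]]
        ne eclm_qldp_exp_ge_one[OF EA EB ne adm], THEN iffD2])
qed

lemma mtrace_smult_mult:
  assumes "K \<in> carrier_mat n n" "\<rho> \<in> carrier_mat n n"
  shows "mtrace ((c \<cdot>\<^sub>m K) * \<rho>) = c * mtrace (K * \<rho>)"
  using assms by (simp add: mult_smult_assoc_mat mtrace_def sum_distrib_left)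

lemma K_phi_expect_le:
  assumes N: "N \<ge> 1" and EA: "cptp N EA" and EB: "cptp N EB" and ne: "Hs N s \<noteq> {}" and r: "r \<ge> 1"
    and R: "\<And>\<phi>a \<phi>b. is_unit_vector N \<phi>a \<Longrightarrow> is_unit_vector N \<phi>b \<Longrightarrow>
      J_ratio N (K_phi N EA EB \<phi>a \<phi>b) s \<le> ereal r"
    and u: "u \<in> carrier_vec N" and v: "v \<in> carrier_vec N"
    and \<rho>: "\<rho> \<in> Hs N s" and \<rho>': "\<rho>' \<in> Hs N s"
  shows "Re (mtrace (K_phi N EA EB u v * \<rho>)) \<le> r * Re (mtrace (K_phi N EA EB u v * \<rho>'))"
proof -
  obtain \<phi>a c where a: "is_unit_vector N \<phi>a" and c: "c \<ge> 0"
    and u_eq: "ketbra u = complex_of_real c \<cdot>\<^sub>m ketbra \<phi>a"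
    using ketbra_eq_smult_unit[OF N u] by blast
  obtain \<phi>b d where b: "is_unit_vector N \<phi>b" and d: "d \<ge> 0"
    and v_eq: "ketbra v = complex_of_real d \<cdot>\<^sub>m ketbra \<phi>b"
    using ketbra_eq_smult_unit[OF N v] by blast
  note a' = is_unit_vector_carrier[OF a] and b' = is_unit_vector_carrier[OF b]
  let ?K = "K_phi N EA EB \<phi>a \<phi>b"
  have K: "K_phi N EA EB u v = complex_of_real (c * d) \<cdot>\<^sub>m ?K"
    unfolding K_phi_def u_eq v_eq hs_adjoint_smult[OF EA ketbra_carrier[OF a']]
      hs_adjoint_smult[OF EB ketbra_carrier[OF b']]
    by (simp add: kron_smult[where N = N])
  have expect: "Re (mtrace (K_phi N EA EB u v * \<sigma>)) = c * d * Re (mtrace (?K * \<sigma>))"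
    if "\<sigma> \<in> Hs N s" for \<sigma>
    unfolding K mtrace_smult_mult[OF K_phi_carrier Hs_carrier[OF that]] by simp
  have "Re (mtrace (?K * \<rho>)) \<le> r * Re (mtrace (?K * \<rho>'))"
    using J_ratio_le_iff[OF psd_K_phi[OF EA EB a' b'] ne r] R[OF a b] \<rho> \<rho>' by blast
  then show ?thesis unfolding expect[OF \<rho>] expect[OF \<rho>'] using c d
    by (metis mult.left_commute mult_left_mono mult_nonneg_nonneg)
qed

lemma kron_hs_adjoint_expect_le:
  assumes N: "N \<ge> 1" and EA: "cptp N EA" and EB: "cptp N EB" and ne: "Hs N s \<noteq> {}" and r: "r \<ge> 1"
    and R: "\<And>\<phi>a \<phi>b. is_unit_vector N \<phi>a \<Longrightarrow> is_unit_vector N \<phi>b \<Longrightarrow>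
      J_ratio N (K_phi N EA EB \<phi>a \<phi>b) s \<le> ereal r"
    and MA: "psd N MA" and MB: "psd N MB" and \<rho>: "\<rho> \<in> Hs N s" and \<rho>': "\<rho>' \<in> Hs N s"
  shows "Re (mtrace (kron (hs_adjoint N EA MA) (hs_adjoint N EB MB) * \<rho>)) \<le>
    r * Re (mtrace (kron (hs_adjoint N EA MA) (hs_adjoint N EB MB) * \<rho>'))"
proof -
  obtain m1 us1 where d1: "rank_one_decomp N MA m1 us1" using psd_rank_one_decomp[OF MA] by blast
  obtain m2 us2 where d2: "rank_one_decomp N MB m2 us2" using psd_rank_one_decomp[OF MB] by blast
  have adjA: "hs_adjoint N EA MA $$ (i, j) = (\<Sum>k<m1. hs_adjoint N EA (ketbra (us1 k)) $$ (i, j))"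
    if "i < N" "j < N" for i j
    using psd_carrier[OF MA] rank_one_decomp_carrier[OF d1] that
    by (intro hs_adjoint_sum_entries[OF EA]) (simp_all add: rank_one_decomp_entry[OF d1])
  have adjB: "hs_adjoint N EB MB $$ (i, j) = (\<Sum>l<m2. hs_adjoint N EB (ketbra (us2 l)) $$ (i, j))"
    if "i < N" "j < N" for i j
    using psd_carrier[OF MB] rank_one_decomp_carrier[OF d2] that
    by (intro hs_adjoint_sum_entries[OF EB]) (simp_all add: rank_one_decomp_entry[OF d2])
  have expand: "Re (mtrace (kron (hs_adjoint N EA MA) (hs_adjoint N EB MB) * \<sigma>)) =
      (\<Sum>k<m1. \<Sum>l<m2. Re (mtrace (K_phi N EA EB (us1 k) (us2 l) * \<sigma>)))" if "\<sigma> \<in> Hs N s" for \<sigma>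
  proof -
    obtain \<psi> where \<sigma>_eq: "\<sigma> = ketbra \<psi>" and \<psi>: "is_unit_vector (N * N) \<psi>"
      using \<open>\<sigma> \<in> Hs N s\<close> by (rule Hs_memE)
    note tr = mtrace_ketbra[OF _ is_unit_vector_carrier[OF \<psi>]]
    have "qform (N * N) (kron (hs_adjoint N EA MA) (hs_adjoint N EB MB)) \<psi> =
        (\<Sum>k<m1. \<Sum>l<m2. qform (N * N) (K_phi N EA EB (us1 k) (us2 l)) \<psi>)"
      unfolding K_phi_def by (rule qform_kron_sum_entries) (simp_all add: adjA adjB)
    then show ?thesis unfolding \<sigma>_eq by (simp add: tr Re_sum)
  qed
  show ?thesis
    unfolding expand[OF \<rho>] expand[OF \<rho>'] sum_distrib_left
    using rank_one_decomp_carrier[OF d1] rank_one_decomp_carrier[OF d2]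
    by (intro sum_mono K_phi_expect_le[OF N EA EB ne r R _ _ \<rho> \<rho>']) auto
qed

lemma J_ratio_le_imp_eclm_qldp:
  assumes N: "N \<ge> 1" and EA: "cptp N EA" and EB: "cptp N EB" and ne: "Hs N s \<noteq> {}" and r: "r \<ge> 1"
    and R: "\<And>\<phi>a \<phi>b. is_unit_vector N \<phi>a \<Longrightarrow> is_unit_vector N \<phi>b \<Longrightarrow>
      J_ratio N (K_phi N EA EB \<phi>a \<phi>b) s \<le> ereal r"
  shows "eclm_qldp N EA EB s (ln r)"
  unfolding eclm_qldp_def
proof (intro allI impI ballI)
  fix ma mb MA MB \<rho> \<rho>' and T :: "(nat \<times> nat) set"
  assume pa: "povm N ma MA" and pb: "povm N mb MB" and \<rho>: "\<rho> \<in> Hs N s" and \<rho>': "\<rho>' \<in> Hs N s"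
    and T: "T \<subseteq> {..<ma} \<times> {..<mb}"
  have psd: "psd N (MA a)" "psd N (MB b)" if "(a, b) \<in> T" for a b
    using pa pb T that unfolding povm_def by auto
  have prob: "lm_prob N EA EB MA MB \<sigma> T =
      (\<Sum>(a, b)\<in>T. Re (mtrace (kron (hs_adjoint N EA (MA a)) (hs_adjoint N EB (MB b)) * \<sigma>)))"
    if "\<sigma> \<in> Hs N s" for \<sigma>
    using psd psd_carrier by (intro lm_prob_eq_sum_adjoint[OF EA EB that]) auto
  have "lm_prob N EA EB MA MB \<rho> T \<le> r * lm_prob N EA EB MA MB \<rho>' T"
    unfolding prob[OF \<rho>] prob[OF \<rho>'] sum_distrib_left
  proof (rule sum_mono, clarify)
    fix a b assume "(a, b) \<in> T"
    then show "Re (mtrace (kron (hs_adjoint N EA (MA a)) (hs_adjoint N EB (MB b)) * \<rho>)) \<le>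
        r * Re (mtrace (kron (hs_adjoint N EA (MA a)) (hs_adjoint N EB (MB b)) * \<rho>'))"
      using psd by (intro kron_hs_adjoint_expect_le[OF N EA EB ne r R _ _ \<rho> \<rho>'])
  qed
  then show "lm_prob N EA EB MA MB \<rho> T \<le> exp (ln r) * lm_prob N EA EB MA MB \<rho>' T"
    using r by simp
qed

lemma eps_star_le_ln:
  assumes "N \<ge> 1" "cptp N EA" "cptp N EB" "Hs N s \<noteq> {}" "r \<ge> 1"
    and "\<And>\<phi>a \<phi>b. is_unit_vector N \<phi>a \<Longrightarrow> is_unit_vector N \<phi>b \<Longrightarrow>
      J_ratio N (K_phi N EA EB \<phi>a \<phi>b) s \<le> ereal r"
  shows "eps_star N EA EB s \<le> ereal (ln r)"
  unfolding eps_star_def using J_ratio_le_imp_eclm_qldp[OF assms] by (auto intro: Inf_lower)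

lemma ereal_ln_le_ereal:
  assumes "x \<le> ereal (exp e)"
  shows "ereal_ln x \<le> ereal e"
proof (cases x)
  case (real t)
  then show ?thesis
    using assms ln_le_cancel_iff[of t "exp e"] by (cases "t > 0") (auto simp: ereal_ln_def)
qed (use assms in \<open>auto simp: ereal_ln_def\<close>)

lemma le_SUP_SUP:
  fixes f :: "'a \<Rightarrow> 'b \<Rightarrow> 'c::complete_lattice"
  assumes "a \<in> A" "b \<in> B"
  shows "f a b \<le> (SUP a\<in>A. SUP b\<in>B. f a b)"
  by (rule SUP_upper2[OF assms(1)]) (rule SUP_upper[OF assms(2)])

theorem theorem2:
  fixes N :: nat and s :: real and EA EB :: "complex mat \<Rightarrow> complex mat"
  assumes "N \<ge> 1"
    and "0 \<le> s" and "s \<le> ln (real N)"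
    and "cptp N EA" and "cptp N EB"
  shows "eps_star N EA EB s =
    ereal_ln (SUP \<phi>a \<in> {v. is_unit_vector N v}. SUP \<phi>b \<in> {v. is_unit_vector N v}.
                 J_ratio N (K_phi N EA EB \<phi>a \<phi>b) s)"
proof -
  let ?S = "SUP \<phi>a \<in> {v. is_unit_vector N v}. SUP \<phi>b \<in> {v. is_unit_vector N v}. J_ratio N (K_phi N EA EB \<phi>a \<phi>b) s"
  have ne: "Hs N s \<noteq> {}" using Hs_nonempty assms(1,3) .
  have le_S: "J_ratio N (K_phi N EA EB \<phi>a \<phi>b) s \<le> ?S"
    if "is_unit_vector N \<phi>a" "is_unit_vector N \<phi>b" for \<phi>a \<phi>b
    using that by (intro le_SUP_SUP) simp_all
  have "eps_star N EA EB s \<le> ereal_ln ?S"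
  proof (cases "?S = \<infinity>")
    case False
    have e: "is_unit_vector N (unit_vec N 0)" using is_unit_vector_unit_vec assms(1) .
    have "1 \<le> ?S"
      using J_ratio_ge_one[OF psd_K_phi[OF assms(4,5) is_unit_vector_carrier[OF e] is_unit_vector_carrier[OF e]] ne]
        le_S[OF e e] by (rule order_trans)
    with False obtain r where S: "?S = ereal r" and r: "r \<ge> 1" by (cases ?S) auto
    then show ?thesis
      using eps_star_le_ln[OF assms(1,4,5) ne r le_S[unfolded S]] by (simp add: ereal_ln_def)
  qed (simp add: ereal_ln_def)
  moreover have "ereal_ln ?S \<le> eps_star N EA EB s"
    unfolding eps_star_def
  proof (rule Inf_greatest, clarify)
    fix \<epsilon> assume "eclm_qldp N EA EB s \<epsilon>"
    then have "?S \<le> ereal (exp \<epsilon>)"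
      by (auto intro!: SUP_least eclm_qldp_J_ratio_le[OF assms(4,5) ne])
    then show "ereal_ln ?S \<le> ereal \<epsilon>" by (rule ereal_ln_le_ereal)
  qed
  ultimately show ?thesis by (rule antisym)
qed

end
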